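(* Let $(\mathbf A,G,H)$ be a tense Pavelka algebra whose underlying Pavelka algebra $\mathbf A$ is semisimple, and let $R\colon\mathrm{Spec_M}\mathbf A\times\mathrm{Spec_M}\mathbf A\to[0,1]$, $R(F,F')=\bigwedge_{a\in A}(G(a)/F'\rightarrow a/F)$, be its natural time frame relation. Then: (i) $R$ is reflexive if and only if $G(x)\le x$ for all $x\in A$ (equivalently, if and only if $H(x)\le x$ for all $x\in A$); (ii) $R$ is symmetric if and only if $H=G$; (iii) $R$ is transitive if and only if $G(x)\le G(G(x))$ for all $x\in A$ (equivalently, if and only if $H(x)\le H(H(x))$ for all $x\in A$).
   Context: An MV-algebra $(A;\oplus,\neg,0)$ carries derived operations $1=\neg0$, $x\cdot y=\neg(\neg x\oplus\neg y)$, $x\rightarrow y=\neg x\oplus y$, $x\wedge y$, $x\vee y$ (lattice operations of the order $x\le y$ iff $\neg x\oplus y=1$). The standard MV-algebra is $[0,1]$ with $x\oplus y=\min\{x+y,1\}$, $\neg x=1-x$. A Pavelka algebra is $\mathbf A=(A;\oplus,\neg,\{\mathbf r\mid r\in[0,1]\cap\mathbb Q\})$ with $(A;\oplus,\neg,\mathbf 0)$ an MV-algebra, $\mathbf r\oplus\mathbf s=\mathbf t$ whenever $\min\{r+s,1\}=t$, $\neg\mathbf r=\mathbf s$ whenever $1-r=s$. Filters are filters of the MV-reduct; $\mathrm{Spec_M}\mathbf A$ is the set of maximal proper filters; $\mathbf A/F$ embeds uniquely into $[0,1]$ and $x/F$ is identified with its image. Semisimple: MV-reduct is a subdirect product of simple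 MV-algebras. A tense Pavelka algebra is $(\mathbf A,G,H)$ with $G,H\colon A\to A$ such that for all $x,y$ and constants $\mathbf r$: (PT1) $G(x\wedge y)=G(x)\wedge G(y)$, $H(x\wedge y)=H(x)\wedge H(y)$; (PT2) $\mathbf r\rightarrow G(x)=G(\mathbf r\rightarrow x)$, $\mathbf r\rightarrow H(x)=H(\mathbf r\rightarrow x)$; (PT3) $\neg H(\neg G(x))\le x$, $\neg G(\neg H(x))\le x$. A fuzzy relation $R\colon T\times T\to[0,1]$ is reflexive if $R(t,t)=1$, symmetric if $R(s,t)=R(t,s)$, transitive if $R(s,t)\cdot R(t,u)\le R(s,u)$ for all $s,t,u$. *)

theory Defs
  imports "HOL-Analysis.Analysis"
begin

text \<open>An algebra is given by a carrier A, operations oplus, neg and the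
  Pavelka constants c r (r rational in [0,1]); the MV zero is c 0.\<close>

definition mv_algebra :: "'a set \<Rightarrow> ('a \<Rightarrow> 'a \<Rightarrow> 'a) \<Rightarrow> ('a \<Rightarrow> 'a) \<Rightarrow> 'a \<Rightarrow> bool" where
  "mv_algebra A oplus neg z \<longleftrightarrow>
     z \<in> A \<and>
     (\<forall>x\<in>A. \<forall>y\<in>A. oplus x y \<in> A) \<and> (\<forall>x\<in>A. neg x \<in> A) \<and>
     (\<forall>x\<in>A. \<forall>y\<in>A. \<forall>w\<in>A. oplus x (oplus y w) = oplus (oplus x y) w) \<and>
     (\<forall>x\<in>A. \<forall>y\<in>A. oplus x y = oplus y x) \<and>
     (\<forall>x\<in>A. oplus x z = x) \<and>
     (\<forall>x\<in>A. neg (neg x) = x) \<and>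
     (\<forall>x\<in>A. oplus x (neg z) = neg z) \<and>
     (\<forall>x\<in>A. \<forall>y\<in>A. oplus (neg (oplus (neg x) y)) y = oplus (neg (oplus (neg y) x)) x)"

definition mv_one :: "('a \<Rightarrow> 'a) \<Rightarrow> 'a \<Rightarrow> 'a" where
  "mv_one neg z = neg z"

definition mv_mult :: "('a \<Rightarrow> 'a \<Rightarrow> 'a) \<Rightarrow> ('a \<Rightarrow> 'a) \<Rightarrow> 'a \<Rightarrow> 'a \<Rightarrow> 'a" where
  "mv_mult oplus neg x y = neg (oplus (neg x) (neg y))"

definition mv_imp :: "('a \<Rightarrow> 'a \<Rightarrow> 'a) \<Rightarrow> ('a \<Rightarrow> 'a) \<Rightarrow> 'a \<Rightarrow> 'a \<Rightarrow> 'a" where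
  "mv_imp oplus neg x y = oplus (neg x) y"

definition mv_sup :: "('a \<Rightarrow> 'a \<Rightarrow> 'a) \<Rightarrow> ('a \<Rightarrow> 'a) \<Rightarrow> 'a \<Rightarrow> 'a \<Rightarrow> 'a" where
  "mv_sup oplus neg x y = oplus (neg (oplus (neg x) y)) y"

definition mv_inf :: "('a \<Rightarrow> 'a \<Rightarrow> 'a) \<Rightarrow> ('a \<Rightarrow> 'a) \<Rightarrow> 'a \<Rightarrow> 'a \<Rightarrow> 'a" where
  "mv_inf oplus neg x y = neg (mv_sup oplus neg (neg x) (neg y))"

definition mv_le :: "('a \<Rightarrow> 'a \<Rightarrow> 'a) \<Rightarrow> ('a \<Rightarrow> 'a) \<Rightarrow> 'a \<Rightarrow> 'a \<Rightarrow> 'a \<Rightarrow> bool" where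
  "mv_le oplus neg z x y \<longleftrightarrow> oplus (neg x) y = neg z"

definition pavelka_algebra :: "'a set \<Rightarrow> ('a \<Rightarrow> 'a \<Rightarrow> 'a) \<Rightarrow> ('a \<Rightarrow> 'a) \<Rightarrow> (rat \<Rightarrow> 'a) \<Rightarrow> bool" where
  "pavelka_algebra A oplus neg c \<longleftrightarrow>
     mv_algebra A oplus neg (c 0) \<and>
     (\<forall>r. 0 \<le> r \<and> r \<le> 1 \<longrightarrow> c r \<in> A) \<and>
     (\<forall>r s. 0 \<le> r \<and> r \<le> 1 \<and> 0 \<le> s \<and> s \<le> 1 \<longrightarrow> oplus (c r) (c s) = c (min (r + s) 1)) \<and>
     (\<forall>r. 0 \<le> r \<and> r \<le> 1 \<longrightarrow> neg (c r) = c (1 - r))"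

definition mv_filter :: "'a set \<Rightarrow> ('a \<Rightarrow> 'a \<Rightarrow> 'a) \<Rightarrow> ('a \<Rightarrow> 'a) \<Rightarrow> 'a \<Rightarrow> 'a set \<Rightarrow> bool" where
  "mv_filter A oplus neg z F \<longleftrightarrow>
     F \<subseteq> A \<and> neg z \<in> F \<and>
     (\<forall>x\<in>F. \<forall>y\<in>F. mv_mult oplus neg x y \<in> F) \<and>
     (\<forall>x\<in>F. \<forall>y\<in>A. mv_le oplus neg z x y \<longrightarrow> y \<in> F)"

definition max_filters :: "'a set \<Rightarrow> ('a \<Rightarrow> 'a \<Rightarrow> 'a) \<Rightarrow> ('a \<Rightarrow> 'a) \<Rightarrow> 'a \<Rightarrow> 'a set set" where
  "max_filters A oplus neg z =
     {F. mv_filter A oplus neg z F \<and> F \<noteq> A \<and>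
         (\<forall>F'. mv_filter A oplus neg z F' \<and> F' \<noteq> A \<and> F \<subseteq> F' \<longrightarrow> F' = F)}"

definition semisimple :: "'a set \<Rightarrow> ('a \<Rightarrow> 'a \<Rightarrow> 'a) \<Rightarrow> ('a \<Rightarrow> 'a) \<Rightarrow> 'a \<Rightarrow> bool" where
  "semisimple A oplus neg z \<longleftrightarrow>
     {x\<in>A. \<forall>F\<in>max_filters A oplus neg z. x \<in> F} = {neg z}"

definition std_hom :: "'a set \<Rightarrow> ('a \<Rightarrow> 'a \<Rightarrow> 'a) \<Rightarrow> ('a \<Rightarrow> 'a) \<Rightarrow> 'a \<Rightarrow> ('a \<Rightarrow> real) \<Rightarrow> bool" where
  "std_hom A oplus neg z h \<longleftrightarrow>
     (\<forall>x\<in>A. 0 \<le> h x \<and> h x \<le> 1) \<and> h z = 0 \<and>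
     (\<forall>x\<in>A. h (neg x) = 1 - h x) \<and>
     (\<forall>x\<in>A. \<forall>y\<in>A. h (oplus x y) = min (h x + h y) 1)"

text \<open>x/F identified with its image under the (unique) embedding of A/F into [0,1],
  i.e. under the homomorphism A \<rightarrow> [0,1] whose kernel filter is F.\<close>
definition quot_val :: "'a set \<Rightarrow> ('a \<Rightarrow> 'a \<Rightarrow> 'a) \<Rightarrow> ('a \<Rightarrow> 'a) \<Rightarrow> 'a \<Rightarrow> 'a set \<Rightarrow> 'a \<Rightarrow> real" where
  "quot_val A oplus neg z F x =
     (THE v. \<exists>h. std_hom A oplus neg z h \<and> {y\<in>A. h y = 1} = F \<and> h x = v)"

definition tense_pavelka :: "'a set \<Rightarrow> ('a \<Rightarrow> 'a \<Rightarrow> 'a) \<Rightarrow> ('a \<Rightarrow> 'a) \<Rightarrow> (rat \<Rightarrow> 'a)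
    \<Rightarrow> ('a \<Rightarrow> 'a) \<Rightarrow> ('a \<Rightarrow> 'a) \<Rightarrow> bool" where
  "tense_pavelka A oplus neg c G H \<longleftrightarrow>
     pavelka_algebra A oplus neg c \<and>
     (\<forall>x\<in>A. G x \<in> A \<and> H x \<in> A) \<and>
     (\<forall>x\<in>A. \<forall>y\<in>A. G (mv_inf oplus neg x y) = mv_inf oplus neg (G x) (G y) \<and>
                    H (mv_inf oplus neg x y) = mv_inf oplus neg (H x) (H y)) \<and>
     (\<forall>r. \<forall>x\<in>A. 0 \<le> r \<and> r \<le> 1 \<longrightarrow>
          mv_imp oplus neg (c r) (G x) = G (mv_imp oplus neg (c r) x) \<and>
          mv_imp oplus neg (c r) (H x) = H (mv_imp oplus neg (c r) x)) \<and>
     (\<forall>x\<in>A. mv_le oplus neg (c 0) (neg (H (neg (G x)))) x \<and>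
             mv_le oplus neg (c 0) (neg (G (neg (H x)))) x)"

definition luk_imp :: "real \<Rightarrow> real \<Rightarrow> real" where
  "luk_imp u v = min 1 (1 - u + v)"

definition luk_mult :: "real \<Rightarrow> real \<Rightarrow> real" where
  "luk_mult u v = max 0 (u + v - 1)"

definition time_rel :: "'a set \<Rightarrow> ('a \<Rightarrow> 'a \<Rightarrow> 'a) \<Rightarrow> ('a \<Rightarrow> 'a) \<Rightarrow> 'a \<Rightarrow> ('a \<Rightarrow> 'a)
    \<Rightarrow> 'a set \<Rightarrow> 'a set \<Rightarrow> real" where
  "time_rel A oplus neg z G F F' =
     (INF a\<in>A. luk_imp (quot_val A oplus neg z F' (G a)) (quot_val A oplus neg z F a))"

definition fuzzy_refl :: "'b set \<Rightarrow> ('b \<Rightarrow> 'b \<Rightarrow> real) \<Rightarrow> bool" where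
  "fuzzy_refl T R \<longleftrightarrow> (\<forall>t\<in>T. R t t = 1)"

definition fuzzy_sym :: "'b set \<Rightarrow> ('b \<Rightarrow> 'b \<Rightarrow> real) \<Rightarrow> bool" where
  "fuzzy_sym T R \<longleftrightarrow> (\<forall>s\<in>T. \<forall>t\<in>T. R s t = R t s)"

definition fuzzy_trans :: "'b set \<Rightarrow> ('b \<Rightarrow> 'b \<Rightarrow> real) \<Rightarrow> bool" where
  "fuzzy_trans T R \<longleftrightarrow> (\<forall>s\<in>T. \<forall>t\<in>T. \<forall>u\<in>T. luk_mult (R s t) (R t u) \<le> R s u)"

end

theory Submission
  imports Defs
begin

text \<open>
  By semisimplicity, elements of \<open>A\<close> are compared pointwise through the
  evaluations \<open>x \<mapsto> x/F\<close> at the maximal filters \<open>F\<close>. Such an evaluation is built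
  from the Dedekind cut that \<open>x\<close> determines among the rational constants in the
  chain \<open>A/F\<close>, and it is the only homomorphism into \<open>[0,1]\<close> with kernel \<open>F\<close>.

  The heart of the proof is the representation
  \<open>G(y)/F = \<Sqinter>\<^bsub>F'\<^esub> (R(F',F) \<rightarrow> y/F')\<close>.
  One inequality is the definition of \<open>R\<close>. For the other, if every \<open>F'\<close> stayed
  \<open>\<epsilon>\<close> away from \<open>G(y)/F\<close>, then every \<open>F'\<close> would see some \<open>w\<close> with \<open>G(w)/F\<close> well
  above \<open>G(y)/F\<close> but \<open>w/F'\<close> below a slight enlargement \<open>y'\<close> of \<open>y\<close>; by compactness
  of \<open>Spec\<^sub>M\<close>, finitely many such \<open>w\<close> have their meet below \<open>y'\<close>, and since \<open>G\<close>
  preserves meets and shifts by constants this contradicts the choice of \<open>y'\<close>.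

  Given the representation, reflexivity, symmetry and transitivity of \<open>R\<close> turn
  into \<open>G \<le> id\<close>, \<open>H = G\<close> and \<open>G \<le> G \<circ> G\<close>. The axioms (PT3) make the frame of
  \<open>(A, H, G)\<close> the converse of \<open>R\<close>, which gives the statements about \<open>H\<close>.
\<close>

lemma exists_unit_rat_between:
  fixes a b :: real
  assumes "0 \<le> a" "a < b" "b \<le> 1"
  shows "\<exists>q. 0 \<le> q \<and> q \<le> 1 \<and> a < of_rat q \<and> of_rat q < b"
proof -
  obtain q where q: "a < of_rat q" "of_rat q < b" using of_rat_dense assms(2) by blast
  then have "(0::real) \<le> of_rat q" "of_rat q \<le> (1::real)" using assms by linarith+
  then show ?thesis using q by (auto simp: of_rat_less_eq[symmetric])
qed

lemma exists_unit_rat_between2: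
  fixes a b :: real
  assumes "0 \<le> a" "a < b" "b \<le> 1"
  shows "\<exists>q1 q2. 0 \<le> q1 \<and> q1 \<le> 1 \<and> 0 \<le> q2 \<and> q2 \<le> 1 \<and> a < of_rat q1 \<and> q1 < q2 \<and> of_rat q2 < b"
proof -
  obtain q1 where q1: "0 \<le> q1" "q1 \<le> 1" "a < of_rat q1" "of_rat q1 < b"
    using exists_unit_rat_between assms by blast
  obtain q2 where q2: "0 \<le> q2" "q2 \<le> 1" "of_rat q1 < (of_rat q2 :: real)" "of_rat q2 < b"
    using exists_unit_rat_between[of "of_rat q1" b] q1 assms by auto
  have "q1 < q2" using q2(3) by (simp add: of_rat_less)
  then show ?thesis using q1 q2 by blast
qed

lemma luk_imp_le_one: "luk_imp u v \<le> 1"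
  by (simp add: luk_imp_def)

lemma luk_imp_nonneg: "u \<le> 1 \<Longrightarrow> 0 \<le> v \<Longrightarrow> 0 \<le> luk_imp u v"
  by (simp add: luk_imp_def)

lemma le_luk_imp_iff: "t \<le> 1 \<Longrightarrow> t \<le> luk_imp u v \<longleftrightarrow> t + u - 1 \<le> v"
  by (auto simp: luk_imp_def)

lemma luk_imp_less_iff: "t \<le> 1 \<Longrightarrow> luk_imp u v < t \<longleftrightarrow> v < t + u - 1"
  by (auto simp: luk_imp_def)

lemma fuzzy_refl_converse:
  assumes "\<And>s t. s \<in> T \<Longrightarrow> t \<in> T \<Longrightarrow> R' s t = R t s"
  shows "fuzzy_refl T R' \<longleftrightarrow> fuzzy_refl T R"
  using assms by (simp add: fuzzy_refl_def)

lemma fuzzy_trans_converse: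
  assumes "\<And>s t. s \<in> T \<Longrightarrow> t \<in> T \<Longrightarrow> R' s t = R t s"
  shows "fuzzy_trans T R' \<longleftrightarrow> fuzzy_trans T R"
  using assms unfolding fuzzy_trans_def luk_mult_def by (metis add.commute)

section \<open>MV-algebras\<close>

locale mv_alg =
  fixes A :: "'a set" and oplus :: "'a \<Rightarrow> 'a \<Rightarrow> 'a" (infixl \<open>\<oplus>\<close> 65)
    and neg :: "'a \<Rightarrow> 'a" and zero :: 'a
  assumes mv_algebra: "mv_algebra A (\<oplus>) neg zero"
begin

abbreviation one :: 'a where "one \<equiv> neg zero"
abbreviation mtimes (infixl \<open>\<odot>\<close> 70) where "x \<odot> y \<equiv> mv_mult (\<oplus>) neg x y"
abbreviation mle (infix \<open>\<preceq>\<close> 50) where "x \<preceq> y \<equiv> mv_le (\<oplus>) neg zero x y"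
abbreviation msup (infixl \<open>\<squnion>\<close> 65) where "x \<squnion> y \<equiv> mv_sup (\<oplus>) neg x y"
abbreviation minf (infixl \<open>\<sqinter>\<close> 70) where "x \<sqinter> y \<equiv> mv_inf (\<oplus>) neg x y"
abbreviation mimp (infixr \<open>\<rightharpoonup>\<close> 60) where "x \<rightharpoonup> y \<equiv> mv_imp (\<oplus>) neg x y"

lemma zero_closed [simp]: "zero \<in> A"
  and oplus_closed [simp]: "x \<in> A \<Longrightarrow> y \<in> A \<Longrightarrow> x \<oplus> y \<in> A"
  and neg_closed [simp]: "x \<in> A \<Longrightarrow> neg x \<in> A"
  and oplus_assoc: "x \<in> A \<Longrightarrow> y \<in> A \<Longrightarrow> w \<in> A \<Longrightarrow> x \<oplus> (y \<oplus> w) = x \<oplus> y \<oplus> w"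
  and oplus_commute: "x \<in> A \<Longrightarrow> y \<in> A \<Longrightarrow> x \<oplus> y = y \<oplus> x"
  and oplus_zero [simp]: "x \<in> A \<Longrightarrow> x \<oplus> zero = x"
  and neg_neg [simp]: "x \<in> A \<Longrightarrow> neg (neg x) = x"
  and oplus_one [simp]: "x \<in> A \<Longrightarrow> x \<oplus> one = one"
  and mv_axiom: "x \<in> A \<Longrightarrow> y \<in> A \<Longrightarrow> neg (neg x \<oplus> y) \<oplus> y = neg (neg y \<oplus> x) \<oplus> x"
  using mv_algebra unfolding mv_algebra_def by blast+

lemma mv_mult_closed [simp]: "x \<in> A \<Longrightarrow> y \<in> A \<Longrightarrow> x \<odot> y \<in> A"
  and mv_sup_closed [simp]: "x \<in> A \<Longrightarrow> y \<in> A \<Longrightarrow> x \<squnion> y \<in> A"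
  and mv_inf_closed [simp]: "x \<in> A \<Longrightarrow> y \<in> A \<Longrightarrow> x \<sqinter> y \<in> A"
  and mv_imp_closed [simp]: "x \<in> A \<Longrightarrow> y \<in> A \<Longrightarrow> x \<rightharpoonup> y \<in> A"
  by (simp_all add: mv_mult_def mv_sup_def mv_inf_def mv_imp_def)

lemma zero_oplus [simp]: "x \<in> A \<Longrightarrow> zero \<oplus> x = x"
  by (metis oplus_commute zero_closed oplus_zero)

lemma one_oplus [simp]: "x \<in> A \<Longrightarrow> one \<oplus> x = one"
  by (metis oplus_commute zero_closed neg_closed oplus_one)

lemma oplus_neg_self [simp]: "x \<in> A \<Longrightarrow> x \<oplus> neg x = one"
  using mv_axiom[of x one] by (simp add: oplus_commute)

lemma neg_oplus_self [simp]: "x \<in> A \<Longrightarrow> neg x \<oplus> x = one"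
  by (metis oplus_commute neg_closed oplus_neg_self)

lemma mv_mult_commute: "x \<in> A \<Longrightarrow> y \<in> A \<Longrightarrow> x \<odot> y = y \<odot> x"
  by (simp add: mv_mult_def oplus_commute)

lemma mv_mult_assoc: "x \<in> A \<Longrightarrow> y \<in> A \<Longrightarrow> w \<in> A \<Longrightarrow> x \<odot> (y \<odot> w) = x \<odot> y \<odot> w"
  by (simp add: mv_mult_def oplus_assoc)

lemma mv_mult_one [simp]: "x \<in> A \<Longrightarrow> x \<odot> one = x"
  and mv_one_mult [simp]: "x \<in> A \<Longrightarrow> one \<odot> x = x"
  and mv_mult_zero [simp]: "x \<in> A \<Longrightarrow> x \<odot> zero = zero"
  and mv_mult_neg_self [simp]: "x \<in> A \<Longrightarrow> x \<odot> neg x = zero"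
  by (simp_all add: mv_mult_def oplus_commute)

lemma mv_le_refl [simp]: "x \<in> A \<Longrightarrow> x \<preceq> x"
  and mv_zero_le [simp]: "x \<in> A \<Longrightarrow> zero \<preceq> x"
  and mv_le_one [simp]: "x \<in> A \<Longrightarrow> x \<preceq> one"
  by (simp_all add: mv_le_def)

lemma neg_inject: "x \<in> A \<Longrightarrow> y \<in> A \<Longrightarrow> neg x = neg y \<longleftrightarrow> x = y"
  by (metis neg_neg)

lemma mv_le_iff_mult_neg: "x \<in> A \<Longrightarrow> y \<in> A \<Longrightarrow> x \<preceq> y \<longleftrightarrow> x \<odot> neg y = zero"
  using neg_inject[of "neg x \<oplus> y" one] by (simp add: mv_le_def mv_mult_def)

lemma mv_le_decomp: "x \<in> A \<Longrightarrow> y \<in> A \<Longrightarrow> x \<preceq> y \<Longrightarrow> y = x \<oplus> (y \<odot> neg x)"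
  using mv_axiom[of x y] by (simp add: mv_le_def mv_mult_def oplus_commute)

lemma mv_le_oplus1: "x \<in> A \<Longrightarrow> w \<in> A \<Longrightarrow> x \<preceq> x \<oplus> w"
  by (simp add: mv_le_def oplus_assoc)

lemma mv_le_oplus2: "x \<in> A \<Longrightarrow> w \<in> A \<Longrightarrow> x \<preceq> w \<oplus> x"
  by (metis oplus_commute mv_le_oplus1)

lemma mv_le_antisym: "x \<in> A \<Longrightarrow> y \<in> A \<Longrightarrow> x \<preceq> y \<Longrightarrow> y \<preceq> x \<Longrightarrow> x = y"
  by (metis mv_le_decomp mv_le_iff_mult_neg oplus_zero)

lemma mv_le_trans [trans]: "x \<preceq> y \<Longrightarrow> y \<preceq> w \<Longrightarrow> x \<in> A \<Longrightarrow> y \<in> A \<Longrightarrow> w \<in> A \<Longrightarrow> x \<preceq> w"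
  by (metis mv_le_decomp mv_le_oplus1 oplus_assoc oplus_closed mv_mult_closed neg_closed)

lemma oplus_right_mono: "x \<in> A \<Longrightarrow> y \<in> A \<Longrightarrow> w \<in> A \<Longrightarrow> x \<preceq> y \<Longrightarrow> x \<oplus> w \<preceq> y \<oplus> w"
  by (metis mv_le_decomp mv_le_oplus1 oplus_assoc oplus_commute oplus_closed mv_mult_closed neg_closed)

lemma oplus_left_mono: "x \<in> A \<Longrightarrow> y \<in> A \<Longrightarrow> w \<in> A \<Longrightarrow> x \<preceq> y \<Longrightarrow> w \<oplus> x \<preceq> w \<oplus> y"
  by (metis oplus_commute oplus_right_mono)

lemma neg_antimono: "x \<in> A \<Longrightarrow> y \<in> A \<Longrightarrow> x \<preceq> y \<Longrightarrow> neg y \<preceq> neg x"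
  by (simp add: mv_le_def oplus_commute)

lemma mv_mult_right_mono: "x \<in> A \<Longrightarrow> y \<in> A \<Longrightarrow> w \<in> A \<Longrightarrow> x \<preceq> y \<Longrightarrow> x \<odot> w \<preceq> y \<odot> w"
  by (simp add: mv_mult_def neg_antimono oplus_right_mono)

lemma mv_mult_left_mono: "x \<in> A \<Longrightarrow> y \<in> A \<Longrightarrow> w \<in> A \<Longrightarrow> x \<preceq> y \<Longrightarrow> w \<odot> x \<preceq> w \<odot> y"
  by (metis mv_mult_commute mv_mult_right_mono)

lemma mv_mult_le1: "x \<in> A \<Longrightarrow> y \<in> A \<Longrightarrow> x \<odot> y \<preceq> x"
  by (metis mv_mult_left_mono mv_le_one mv_mult_one zero_closed neg_closed)

lemma mv_mult_le2: "x \<in> A \<Longrightarrow> y \<in> A \<Longrightarrow> x \<odot> y \<preceq> y"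
  by (metis mv_mult_commute mv_mult_le1)

lemma mv_residuation: "x \<in> A \<Longrightarrow> y \<in> A \<Longrightarrow> w \<in> A \<Longrightarrow> x \<odot> y \<preceq> w \<longleftrightarrow> x \<preceq> neg y \<oplus> w"
  by (simp add: mv_le_def mv_mult_def oplus_assoc)

lemma mv_sup_commute: "x \<in> A \<Longrightarrow> y \<in> A \<Longrightarrow> x \<squnion> y = y \<squnion> x"
  by (simp add: mv_sup_def mv_axiom)

lemma mv_sup_ge2: "x \<in> A \<Longrightarrow> y \<in> A \<Longrightarrow> y \<preceq> x \<squnion> y"
  by (simp add: mv_sup_def mv_le_oplus2)

lemma mv_sup_ge1: "x \<in> A \<Longrightarrow> y \<in> A \<Longrightarrow> x \<preceq> x \<squnion> y"
  by (metis mv_sup_commute mv_sup_ge2)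

lemma mv_sup_least:
  assumes x: "x \<in> A" and y: "y \<in> A" and w: "w \<in> A" and "x \<preceq> w" "y \<preceq> w"
  shows "x \<squnion> y \<preceq> w"
proof -
  define p where "p = neg x \<oplus> y"
  define q where "q = neg w \<oplus> y"
  have pq: "p \<in> A" "q \<in> A" using x y w by (auto simp: p_def q_def)
  have w_eq: "w = neg q \<oplus> y"
    using mv_axiom[OF w y] \<open>y \<preceq> w\<close> y w by (simp add: q_def mv_le_def)
  have "q \<preceq> p"
    unfolding p_def q_def using x y w \<open>x \<preceq> w\<close> by (metis neg_antimono neg_closed oplus_right_mono)
  have "one = neg (neg p \<oplus> y) \<oplus> neg p \<oplus> y"
  proof -
    have "neg (neg p \<oplus> y) \<oplus> neg p = neg (neg (neg p) \<oplus> neg y) \<oplus> neg y"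
      using mv_axiom[of "neg y" "neg p"] y pq by (simp add: oplus_commute)
    then show ?thesis using y pq by (metis oplus_assoc neg_closed oplus_closed neg_oplus_self)
  qed
  also have "\<dots> \<preceq> neg (neg p \<oplus> y) \<oplus> neg q \<oplus> y"
    using \<open>q \<preceq> p\<close> pq y by (intro oplus_right_mono oplus_left_mono neg_antimono) auto
  also have "\<dots> = neg (x \<squnion> y) \<oplus> w"
    using x y w pq by (simp add: mv_sup_def p_def w_eq oplus_assoc)
  finally have "neg (x \<squnion> y) \<oplus> w = one"
    using x y w by (intro mv_le_antisym) auto
  then show ?thesis by (simp add: mv_le_def)
qed

lemma mv_inf_eq: "x \<in> A \<Longrightarrow> y \<in> A \<Longrightarrow> x \<sqinter> y = (x \<oplus> neg y) \<odot> y"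
  by (simp add: mv_inf_def mv_sup_def mv_mult_def)

lemma mv_inf_commute: "x \<in> A \<Longrightarrow> y \<in> A \<Longrightarrow> x \<sqinter> y = y \<sqinter> x"
  by (simp add: mv_inf_def mv_sup_commute)

lemma mv_inf_eq':
  assumes "x \<in> A" "y \<in> A" shows "x \<sqinter> y = x \<odot> (neg x \<oplus> y)"
proof -
  have "x \<sqinter> y = (y \<oplus> neg x) \<odot> x"
    using assms mv_inf_commute mv_inf_eq by simp
  then show ?thesis
    using assms mv_mult_commute[of "y \<oplus> neg x" x] oplus_commute[of y "neg x"] by simp
qed

lemma mv_inf_le1: "x \<in> A \<Longrightarrow> y \<in> A \<Longrightarrow> x \<sqinter> y \<preceq> x"
  by (metis mv_inf_def mv_sup_ge1 neg_closed neg_antimono neg_neg mv_sup_closed)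

lemma mv_inf_le2: "x \<in> A \<Longrightarrow> y \<in> A \<Longrightarrow> x \<sqinter> y \<preceq> y"
  by (metis mv_inf_commute mv_inf_le1)

lemma mv_inf_greatest:
  assumes "x \<in> A" "y \<in> A" "w \<in> A" "w \<preceq> x" "w \<preceq> y"
  shows "w \<preceq> x \<sqinter> y"
proof -
  have "neg x \<squnion> neg y \<preceq> neg w"
    using assms by (intro mv_sup_least neg_antimono) auto
  then show ?thesis
    using assms neg_antimono[of "neg x \<squnion> neg y" "neg w"] by (simp add: mv_inf_def)
qed

lemma mv_inf_absorb1: "x \<in> A \<Longrightarrow> y \<in> A \<Longrightarrow> x \<preceq> y \<Longrightarrow> x \<sqinter> y = x"
  by (metis mv_le_antisym mv_le_refl mv_inf_closed mv_inf_greatest mv_inf_le1)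

lemma oplus_inf_distrib:
  assumes w: "w \<in> A" and a: "a \<in> A" and b: "b \<in> A"
  shows "w \<oplus> (a \<sqinter> b) = (w \<oplus> a) \<sqinter> (w \<oplus> b)"
proof (rule mv_le_antisym)
  let ?u = "(w \<oplus> a) \<sqinter> (w \<oplus> b)"
  have u: "?u \<in> A" using assms by simp
  have shift: "?u \<odot> neg w \<preceq> v" if "v \<in> A" "?u \<preceq> w \<oplus> v" for v
    using that mv_residuation[of ?u "neg w" v] w u by simp
  have "?u \<odot> neg w \<preceq> a \<sqinter> b"
    using assms u by (intro mv_inf_greatest shift mv_inf_le1 mv_inf_le2) auto
  then show "?u \<preceq> w \<oplus> (a \<sqinter> b)"
    using mv_residuation[of ?u "neg w" "a \<sqinter> b"] assms by simp
  show "w \<oplus> (a \<sqinter> b) \<preceq> ?u"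
    using assms by (intro mv_inf_greatest oplus_left_mono mv_inf_le1 mv_inf_le2) auto
qed (use assms in auto)

lemma mv_mult_sup_le:
  assumes x: "x \<in> A" and y: "y \<in> A" and w: "w \<in> A"
  shows "x \<odot> (y \<squnion> w) \<preceq> (x \<odot> y) \<squnion> (x \<odot> w)"
proof -
  let ?s = "(x \<odot> y) \<squnion> (x \<odot> w)"
  have bound: "v \<preceq> neg x \<oplus> ?s" if "v \<in> A" "x \<odot> v \<preceq> ?s" for v
    using that mv_residuation[of v x ?s] mv_mult_commute[of v x] x y w by simp
  have "y \<squnion> w \<preceq> neg x \<oplus> ?s"
    using assms by (intro mv_sup_least bound mv_sup_ge1 mv_sup_ge2) auto
  then show ?thesis
    using mv_residuation[of "y \<squnion> w" x ?s] mv_mult_commute[of x "y \<squnion> w"] assms by simp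
qed

lemma mv_inf_mult_neg_eq_zero:
  assumes x: "x \<in> A" and y: "y \<in> A"
  shows "(x \<odot> neg y) \<sqinter> (y \<odot> neg x) = zero"
proof -
  define p q m t where "p = x \<odot> neg y" and "q = y \<odot> neg x" and "m = x \<sqinter> y" and "t = p \<sqinter> q"
  have closed: "p \<in> A" "q \<in> A" "m \<in> A" "t \<in> A"
    using x y by (auto simp: p_def q_def m_def t_def)
  have "p \<oplus> m = x"
  proof -
    have "m = x \<odot> neg p"
      using x y by (simp add: m_def p_def mv_inf_eq' mv_mult_def)
    then show ?thesis
      using mv_le_decomp[of p x] mv_mult_le1[of x "neg y"] x y closed by (simp add: p_def)
  qed
  moreover have "q \<oplus> m = y"
  proof -
    have "m = y \<sqinter> x"
      using x y by (simp add: m_def mv_inf_commute)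
    then have "m = y \<odot> neg q"
      using x y by (simp add: q_def mv_inf_eq' mv_mult_def)
    then show ?thesis
      using mv_le_decomp[of q y] mv_mult_le1[of y "neg x"] x y closed by (simp add: q_def)
  qed
  ultimately have "m \<oplus> t = m"
    using oplus_inf_distrib[of m p q] closed by (simp add: t_def oplus_commute m_def)
  have "t \<odot> x \<preceq> q \<odot> x"
    using closed x by (intro mv_mult_right_mono) (auto simp: t_def mv_inf_le2)
  moreover have "q \<odot> x = zero"
    using x y by (simp add: q_def mv_mult_assoc[symmetric] mv_mult_commute[of "neg x" x])
  ultimately have "t \<preceq> neg x"
    using mv_le_iff_mult_neg[of t "neg x"] mv_le_antisym[of "t \<odot> x" zero] closed x by simp
  moreover have "neg x \<preceq> neg m"
    using x y by (simp add: m_def neg_antimono mv_inf_le1)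
  ultimately have "t \<preceq> neg m"
    using closed x by (meson mv_le_trans neg_closed)
  then have "t = (t \<oplus> m) \<odot> neg m"
    using mv_inf_absorb1[of t "neg m"] mv_inf_eq[of t "neg m"] closed by simp
  also have "\<dots> = zero"
    using \<open>m \<oplus> t = m\<close> closed by (simp add: oplus_commute)
  finally show ?thesis by (simp add: t_def p_def q_def)
qed

lemma mv_prelinearity:
  assumes "x \<in> A" "y \<in> A"
  shows "(x \<rightharpoonup> y) \<squnion> (y \<rightharpoonup> x) = one"
proof -
  have "neg ((x \<rightharpoonup> y) \<squnion> (y \<rightharpoonup> x)) = zero"
    using mv_inf_mult_neg_eq_zero assms by (simp add: mv_inf_def mv_imp_def mv_mult_def)
  then show ?thesis
    using neg_neg[of "(x \<rightharpoonup> y) \<squnion> (y \<rightharpoonup> x)"] assms by simp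
qed

lemma mv_mult_oplus_le:
  assumes "a \<in> A" "b \<in> A" "w \<in> A"
  shows "a \<odot> (b \<oplus> w) \<preceq> (a \<odot> b) \<oplus> w"
proof -
  have "b \<preceq> neg a \<oplus> (a \<odot> b)"
    using mv_residuation[of b a "a \<odot> b"] mv_mult_commute[of b a] assms by simp
  then have "b \<oplus> w \<preceq> neg a \<oplus> ((a \<odot> b) \<oplus> w)"
    using oplus_right_mono[of b "neg a \<oplus> (a \<odot> b)" w] assms by (simp add: oplus_assoc)
  then show ?thesis
    using mv_residuation[of "b \<oplus> w" a "(a \<odot> b) \<oplus> w"] mv_mult_commute[of a "b \<oplus> w"] assms by simp
qed

lemma mv_imp_trans:
  assumes "x \<in> A" "y \<in> A" "w \<in> A"
  shows "(x \<rightharpoonup> y) \<odot> (y \<rightharpoonup> w) \<preceq> x \<rightharpoonup> w"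
proof -
  have "(x \<rightharpoonup> y) \<odot> neg y = neg x \<sqinter> neg y"
    using assms by (simp add: mv_imp_def mv_inf_eq)
  then have "(x \<rightharpoonup> y) \<odot> neg y \<preceq> neg x"
    using assms by (simp add: mv_inf_le1)
  have "(x \<rightharpoonup> y) \<odot> (y \<rightharpoonup> w) \<preceq> ((x \<rightharpoonup> y) \<odot> neg y) \<oplus> w"
    using assms mv_mult_oplus_le by (simp add: mv_imp_def[of _ _ y w])
  also have "\<dots> \<preceq> x \<rightharpoonup> w"
    using \<open>(x \<rightharpoonup> y) \<odot> neg y \<preceq> neg x\<close> assms by (simp add: oplus_right_mono mv_imp_def[of _ _ x w])
  finally show ?thesis using assms by simp
qed

lemma mv_imp_oplus_le:
  assumes "x \<in> A" "y \<in> A" "w \<in> A"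
  shows "x \<rightharpoonup> y \<preceq> (x \<oplus> w) \<rightharpoonup> (y \<oplus> w)"
proof -
  have "(x \<rightharpoonup> y) \<odot> x = y \<sqinter> x"
    using assms by (simp add: mv_imp_def mv_inf_eq oplus_commute)
  then have "(x \<rightharpoonup> y) \<odot> x \<preceq> y"
    using assms by (simp add: mv_inf_le1)
  have "(x \<rightharpoonup> y) \<odot> (x \<oplus> w) \<preceq> ((x \<rightharpoonup> y) \<odot> x) \<oplus> w"
    using assms by (intro mv_mult_oplus_le) auto
  also have "\<dots> \<preceq> y \<oplus> w"
    using \<open>(x \<rightharpoonup> y) \<odot> x \<preceq> y\<close> assms by (intro oplus_right_mono) auto
  finally show ?thesis
    using mv_residuation[of "x \<rightharpoonup> y" "x \<oplus> w" "y \<oplus> w"] assms by (simp add: mv_imp_def)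
qed

lemma mv_imp_contrapos: "x \<in> A \<Longrightarrow> y \<in> A \<Longrightarrow> neg y \<rightharpoonup> neg x = x \<rightharpoonup> y"
  by (simp add: mv_imp_def oplus_commute)

lemma mv_imp_eq_one_iff: "x \<in> A \<Longrightarrow> y \<in> A \<Longrightarrow> x \<rightharpoonup> y = one \<longleftrightarrow> x \<preceq> y"
  by (simp add: mv_imp_def mv_le_def)

lemma mv_le_imp: "x \<in> A \<Longrightarrow> y \<in> A \<Longrightarrow> y \<preceq> x \<rightharpoonup> y"
  by (simp add: mv_imp_def mv_le_oplus2)

definition mprod :: "'a list \<Rightarrow> 'a" where
  "mprod es = foldr (\<odot>) es one"

definition mpow :: "'a \<Rightarrow> nat \<Rightarrow> 'a" where
  "mpow x n = mprod (replicate n x)"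

lemma mprod_Nil [simp]: "mprod [] = one"
  and mprod_Cons [simp]: "mprod (e # es) = e \<odot> mprod es"
  by (simp_all add: mprod_def)

lemma mprod_closed [simp]: "set es \<subseteq> A \<Longrightarrow> mprod es \<in> A"
  by (induction es) auto

lemma mprod_append: "set es \<subseteq> A \<Longrightarrow> set fs \<subseteq> A \<Longrightarrow> mprod (es @ fs) = mprod es \<odot> mprod fs"
  by (induction es) (auto simp: mv_mult_assoc)

lemma mpow_0 [simp]: "mpow x 0 = one"
  and mpow_Suc [simp]: "mpow x (Suc n) = x \<odot> mpow x n"
  by (simp_all add: mpow_def)

lemma mpow_closed [simp]: "x \<in> A \<Longrightarrow> mpow x n \<in> A"
  by (induction n) auto

lemma mv_sup_mpow_eq_one:
  assumes a: "a \<in> A" and b: "b \<in> A" and ab: "a \<squnion> b = one"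
  shows "mpow a n \<squnion> b = one"
proof (induction n)
  case (Suc n)
  have "a \<odot> b \<preceq> b"
    using a b by (rule mv_mult_le2)
  also have "b \<preceq> mpow a (Suc n) \<squnion> b"
    using a b by (intro mv_sup_ge2) auto
  finally have "a \<odot> b \<preceq> mpow a (Suc n) \<squnion> b"
    using a b by simp
  have "a \<odot> (mpow a n \<squnion> b) \<preceq> (a \<odot> mpow a n) \<squnion> (a \<odot> b)"
    using a b by (intro mv_mult_sup_le) auto
  also have "\<dots> \<preceq> mpow a (Suc n) \<squnion> b"
    using \<open>a \<odot> b \<preceq> mpow a (Suc n) \<squnion> b\<close> a b by (intro mv_sup_least) (auto simp: mv_sup_ge1)
  finally have "a \<preceq> mpow a (Suc n) \<squnion> b"
    using Suc a b by simp
  then have "one \<preceq> mpow a (Suc n) \<squnion> b"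
    using ab a b by (metis mv_sup_least mv_sup_ge2 mv_sup_closed mpow_closed)
  then show ?case
    using a b by (intro mv_le_antisym) auto
qed (use b in \<open>simp add: mv_sup_def\<close>)

lemma mv_sup_mpows_eq_one:
  "a \<in> A \<Longrightarrow> b \<in> A \<Longrightarrow> a \<squnion> b = one \<Longrightarrow> mpow a n \<squnion> mpow b m = one"
  by (metis mv_sup_commute mv_sup_mpow_eq_one mpow_closed)

section \<open>Filters and maximal filters\<close>

abbreviation is_filter :: "'a set \<Rightarrow> bool" where
  "is_filter F \<equiv> mv_filter A (\<oplus>) neg zero F"

abbreviation Spec :: "'a set set" where
  "Spec \<equiv> max_filters A (\<oplus>) neg zero"

lemma filter_subset: "is_filter F \<Longrightarrow> F \<subseteq> A"
  and filter_one: "is_filter F \<Longrightarrow> one \<in> F"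
  and filter_mult: "is_filter F \<Longrightarrow> x \<in> F \<Longrightarrow> y \<in> F \<Longrightarrow> x \<odot> y \<in> F"
  and filter_upclosed: "is_filter F \<Longrightarrow> x \<in> F \<Longrightarrow> y \<in> A \<Longrightarrow> x \<preceq> y \<Longrightarrow> y \<in> F"
  by (simp_all add: mv_filter_def)

lemma filter_eq_carrier: "is_filter F \<Longrightarrow> zero \<in> F \<Longrightarrow> F = A"
  using filter_subset filter_upclosed mv_zero_le by blast

lemma mprod_in_filter: "is_filter F \<Longrightarrow> set es \<subseteq> F \<Longrightarrow> mprod es \<in> F"
  by (induction es) (auto simp: filter_one filter_mult)

lemma Spec_filter: "F \<in> Spec \<Longrightarrow> is_filter F"
  and Spec_proper: "F \<in> Spec \<Longrightarrow> F \<noteq> A"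
  and Spec_maximal: "F \<in> Spec \<Longrightarrow> is_filter F' \<Longrightarrow> F' \<noteq> A \<Longrightarrow> F \<subseteq> F' \<Longrightarrow> F' = F"
  by (simp_all add: max_filters_def)

lemma zero_notin_Spec: "F \<in> Spec \<Longrightarrow> zero \<notin> F"
  using Spec_filter Spec_proper filter_eq_carrier by blast

lemma Spec_subset: "F \<in> Spec \<Longrightarrow> F \<subseteq> A"
  using Spec_filter filter_subset by blast

definition filter_gen :: "'a set \<Rightarrow> 'a set" where
  "filter_gen E = {w \<in> A. \<exists>es. set es \<subseteq> E \<and> mprod es \<preceq> w}"

lemma subset_filter_gen: "E \<subseteq> A \<Longrightarrow> E \<subseteq> filter_gen E"
  unfolding filter_gen_def by (auto intro!: exI[of _ "[_]"])

lemma filter_filter_gen: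
  assumes E: "E \<subseteq> A"
  shows "is_filter (filter_gen E)"
  unfolding mv_filter_def
proof (intro conjI ballI impI)
  show "filter_gen E \<subseteq> A" "one \<in> filter_gen E"
    by (auto simp: filter_gen_def intro!: exI[of _ "[]"])
next
  fix x y assume "x \<in> filter_gen E" "y \<in> filter_gen E"
  then obtain es fs where es: "set es \<subseteq> E" "mprod es \<preceq> x" and fs: "set fs \<subseteq> E" "mprod fs \<preceq> y"
    and xy: "x \<in> A" "y \<in> A"
    unfolding filter_gen_def by blast
  have closed: "mprod es \<in> A" "mprod fs \<in> A" using es fs E by auto
  have "mprod es \<odot> mprod fs \<preceq> x \<odot> mprod fs"
    using es closed xy by (intro mv_mult_right_mono) auto
  also have "\<dots> \<preceq> x \<odot> y"
    using fs closed xy by (intro mv_mult_left_mono) auto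
  finally have "mprod (es @ fs) \<preceq> x \<odot> y"
    using closed xy es fs E by (simp add: mprod_append subset_trans)
  then show "x \<odot> y \<in> filter_gen E"
    unfolding filter_gen_def using es fs xy by (auto intro!: exI[of _ "es @ fs"])
next
  fix x y assume "x \<in> filter_gen E" "y \<in> A" "x \<preceq> y"
  then show "y \<in> filter_gen E"
    unfolding filter_gen_def using E by (blast intro: mv_le_trans mprod_closed)
qed

lemma Spec_extends:
  assumes F0: "is_filter F0" "F0 \<noteq> A"
  shows "\<exists>M\<in>Spec. F0 \<subseteq> M"
proof -
  let ?P = "{F. is_filter F \<and> F \<noteq> A \<and> F0 \<subseteq> F}"
  have "\<forall>C\<in>chains ?P. \<exists>U\<in>?P. \<forall>X\<in>C. X \<subseteq> U"
  proof
    fix C assume C: "C \<in> chains ?P"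
    show "\<exists>U\<in>?P. \<forall>X\<in>C. X \<subseteq> U"
  proof (cases "C = {}")
    case True
    then show ?thesis using F0 by auto
  next
    case False
    have CP: "C \<subseteq> ?P" using C chainsD2 by blast
    have "is_filter (\<Union>C)"
      unfolding mv_filter_def
    proof (intro conjI ballI impI)
      show "\<Union>C \<subseteq> A" using CP filter_subset by blast
      show "one \<in> \<Union>C" using False CP filter_one by blast
    next
      fix x y assume "x \<in> \<Union>C" "y \<in> \<Union>C"
      then obtain X Y where "X \<in> C" "Y \<in> C" "x \<in> X" "y \<in> Y" by blast
      moreover from this have "X \<subseteq> Y \<or> Y \<subseteq> X" using C chainsD by blast
      ultimately show "x \<odot> y \<in> \<Union>C"
        using CP filter_mult by (metis (no_types, lifting) UnionI mem_Collect_eq subset_iff)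
    next
      fix x y assume "x \<in> \<Union>C" "y \<in> A" "x \<preceq> y"
      then show "y \<in> \<Union>C" using CP filter_upclosed by blast
    qed
    moreover have "zero \<notin> \<Union>C" using CP filter_eq_carrier by blast
    then have "\<Union>C \<noteq> A" using zero_closed by blast
    ultimately show ?thesis using False CP by blast
  qed
  qed
  from Zorn_Lemma2[OF this] obtain M where M: "M \<in> ?P" and "\<forall>X\<in>?P. M \<subseteq> X \<longrightarrow> X = M"
    by blast
  then have "M \<in> Spec"
    unfolding max_filters_def by auto
  then show ?thesis using M by blast
qed

lemma mprod_insert_lower_bound:
  assumes F: "is_filter F" and a: "a \<in> A" and es: "set es \<subseteq> insert a F"
  shows "\<exists>f\<in>F. \<exists>n. f \<odot> mpow a n \<preceq> mprod es"
  using es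
proof (induction es)
  case Nil
  have "one \<odot> mpow a 0 \<preceq> mprod []"
    by simp
  then show ?case using filter_one[OF F] by blast
next
  case (Cons e es)
  then obtain f n where f: "f \<in> F" and le: "f \<odot> mpow a n \<preceq> mprod es" by auto
  have closed: "f \<in> A" "set es \<subseteq> A" "e \<in> A"
    using F f Cons.prems a filter_subset by auto
  show ?case
  proof (cases "e = a")
    case True
    have "a \<odot> (f \<odot> mpow a n) \<preceq> a \<odot> mprod es"
      using le closed a by (intro mv_mult_left_mono) auto
    moreover have "f \<odot> mpow a (Suc n) = a \<odot> (f \<odot> mpow a n)"
      using closed a by (simp add: mv_mult_assoc mv_mult_commute[of f a])
    ultimately have "f \<odot> mpow a (Suc n) \<preceq> mprod (e # es)"
      using True by (simp only: mprod_Cons)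
    then show ?thesis using f by blast
  next
    case False
    then have "e \<in> F" using Cons.prems by auto
    have "e \<odot> (f \<odot> mpow a n) \<preceq> e \<odot> mprod es"
      using le closed a by (intro mv_mult_left_mono) auto
    then have "(e \<odot> f) \<odot> mpow a n \<preceq> mprod (e # es)"
      using closed a by (simp add: mv_mult_assoc)
    then show ?thesis
      using F \<open>e \<in> F\<close> f by (auto intro: filter_mult)
  qed
qed

lemma Spec_neg_mpow:
  assumes M: "F \<in> Spec" and a: "a \<in> A" "a \<notin> F"
  shows "\<exists>n. neg (mpow a n) \<in> F"
proof -
  have F: "is_filter F" "F \<subseteq> A" using M Spec_filter Spec_subset by auto
  have "filter_gen (insert a F) = A"
  proof (rule ccontr)
    assume "filter_gen (insert a F) \<noteq> A"
    then have "filter_gen (insert a F) = F"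
      using Spec_maximal[OF M] filter_filter_gen subset_filter_gen F a by (metis insert_subset)
    then show False using subset_filter_gen[of "insert a F"] F a by auto
  qed
  then have "\<exists>es. set es \<subseteq> insert a F \<and> mprod es \<preceq> zero"
    using zero_closed unfolding filter_gen_def by blast
  then obtain es where es: "set es \<subseteq> insert a F" "mprod es \<preceq> zero"
    by blast
  then obtain f n where f: "f \<in> F" "f \<odot> mpow a n \<preceq> mprod es"
    using mprod_insert_lower_bound[OF F(1) a(1)] by blast
  have "set es \<subseteq> A" using es(1) F a by blast
  then have "f \<odot> mpow a n \<preceq> zero"
    using mv_le_trans[OF f(2) es(2)] f(1) F a by auto
  then have "f \<preceq> neg (mpow a n)"
    using mv_residuation[of f "mpow a n" zero] F f a by auto
  then have "neg (mpow a n) \<in> F"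
    using filter_upclosed[OF F(1) f(1)] a by simp
  then show ?thesis ..
qed

lemma Spec_prime:
  assumes M: "F \<in> Spec" and x: "x \<in> A" and y: "y \<in> A"
  shows "x \<rightharpoonup> y \<in> F \<or> y \<rightharpoonup> x \<in> F"
proof (rule ccontr)
  assume "\<not> ?thesis"
  then obtain k l where k: "neg (mpow (x \<rightharpoonup> y) k) \<in> F" and l: "neg (mpow (y \<rightharpoonup> x) l) \<in> F"
    using Spec_neg_mpow[OF M] x y by (meson mv_imp_closed)
  define p q where "p = mpow (x \<rightharpoonup> y) k" and "q = mpow (y \<rightharpoonup> x) l"
  have pq: "p \<in> A" "q \<in> A" using x y by (auto simp: p_def q_def)
  have "neg p \<odot> neg q \<preceq> neg p \<sqinter> neg q"
    using pq by (intro mv_inf_greatest mv_mult_le1 mv_mult_le2) auto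
  also have "neg p \<sqinter> neg q = zero"
    using mv_sup_mpows_eq_one[OF _ _ mv_prelinearity[OF x y]] x y pq
    by (simp add: mv_inf_def p_def q_def)
  finally have "zero \<in> F"
    using filter_upclosed[OF Spec_filter[OF M] filter_mult[OF Spec_filter[OF M] k l]] pq
    by (simp add: p_def q_def)
  then show False using M zero_notin_Spec by blast
qed

lemma Spec_compact:
  assumes f: "\<And>w. w \<in> W \<Longrightarrow> f w \<in> A" and cover: "\<forall>F\<in>Spec. \<exists>w\<in>W. f w \<notin> F"
  shows "\<exists>ws. set ws \<subseteq> W \<and> (\<forall>F\<in>Spec. \<exists>w\<in>set ws. f w \<notin> F)"
proof -
  have E: "f ` W \<subseteq> A" using f by blast
  have "filter_gen (f ` W) = A"
  proof (rule ccontr)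
    assume "filter_gen (f ` W) \<noteq> A"
    then obtain M where "M \<in> Spec" "filter_gen (f ` W) \<subseteq> M"
      using Spec_extends filter_filter_gen[OF E] by blast
    then show False using cover subset_filter_gen[OF E] by blast
  qed
  then have "\<exists>es. set es \<subseteq> f ` W \<and> mprod es \<preceq> zero"
    using zero_closed unfolding filter_gen_def by blast
  then obtain es where es: "set es \<subseteq> f ` W" "mprod es \<preceq> zero"
    by blast
  have "es \<in> map f ` lists W"
    using es(1) by (simp add: lists_image[symmetric] in_listsI subset_iff)
  then obtain ws where ws: "set ws \<subseteq> W" "es = map f ws"
    by blast
  have "\<exists>w\<in>set ws. f w \<notin> F" if M: "F \<in> Spec" for F
  proof (rule ccontr)
    assume "\<not> ?thesis"
    then have "set es \<subseteq> F"
      using ws by auto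
    then have "mprod es \<in> F"
      by (rule mprod_in_filter[OF Spec_filter[OF M]])
    then have "zero \<in> F"
      using filter_upclosed[OF Spec_filter[OF M] _ zero_closed es(2)] by blast
    then show False using M zero_notin_Spec by blast
  qed
  then show ?thesis using ws by blast
qed

definition minf_list :: "'a list \<Rightarrow> 'a" where
  "minf_list ws = foldr (\<sqinter>) ws one"

lemma minf_list_Nil [simp]: "minf_list [] = one"
  and minf_list_Cons [simp]: "minf_list (w # ws) = w \<sqinter> minf_list ws"
  by (simp_all add: minf_list_def)

lemma minf_list_closed [simp]: "set ws \<subseteq> A \<Longrightarrow> minf_list ws \<in> A"
  by (induction ws) auto

lemma minf_list_le: "set ws \<subseteq> A \<Longrightarrow> w \<in> set ws \<Longrightarrow> minf_list ws \<preceq> w"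
proof (induction ws)
  case (Cons v ws)
  show ?case
  proof (cases "w = v")
    case True
    then show ?thesis using Cons.prems by (simp add: mv_inf_le1)
  next
    case False
    then have "minf_list ws \<preceq> w" using Cons by simp
    moreover have "v \<sqinter> minf_list ws \<preceq> minf_list ws" using Cons.prems by (simp add: mv_inf_le2)
    ultimately show ?thesis
      using Cons.prems mv_le_trans[of "v \<sqinter> minf_list ws" "minf_list ws" w] by auto
  qed
qed simp

end

section \<open>Pavelka algebras\<close>

locale pavelka_alg = mv_alg +
  fixes c :: "rat \<Rightarrow> 'a"
  assumes pavelka_algebra: "pavelka_algebra A (\<oplus>) neg c" and const_zero: "c 0 = zero"
begin

lemma const_closed [simp]: "0 \<le> r \<Longrightarrow> r \<le> 1 \<Longrightarrow> c r \<in> A"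
  and const_oplus: "0 \<le> r \<Longrightarrow> r \<le> 1 \<Longrightarrow> 0 \<le> s \<Longrightarrow> s \<le> 1 \<Longrightarrow> c r \<oplus> c s = c (min (r + s) 1)"
  and neg_const: "0 \<le> r \<Longrightarrow> r \<le> 1 \<Longrightarrow> neg (c r) = c (1 - r)"
  using pavelka_algebra by (simp_all add: pavelka_algebra_def)

lemma const_one: "c 1 = one"
  using neg_const[of 0] by (simp add: const_zero)

lemma const_mult:
  assumes "0 \<le> r" "r \<le> 1" "0 \<le> s" "s \<le> 1"
  shows "c r \<odot> c s = c (max 0 (r + s - 1))"
proof -
  have "c r \<odot> c s = neg (c (min (1 - r + (1 - s)) 1))"
    using assms by (simp add: mv_mult_def neg_const const_oplus)
  also have "\<dots> = c (1 - min (1 - r + (1 - s)) 1)"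
    using assms by (simp add: neg_const)
  finally show ?thesis by (simp add: min_def max_def)
qed

lemma const_imp: "0 \<le> r \<Longrightarrow> r \<le> 1 \<Longrightarrow> 0 \<le> s \<Longrightarrow> s \<le> 1 \<Longrightarrow> c r \<rightharpoonup> c s = c (min (1 - r + s) 1)"
  by (simp add: mv_imp_def neg_const const_oplus)

lemma mpow_const: "0 \<le> u \<Longrightarrow> u \<le> 1 \<Longrightarrow> mpow (c u) n = c (max 0 (1 - of_nat n * (1 - u)))"
proof (induction n)
  case 0
  then show ?case by (simp add: const_one)
next
  case (Suc n)
  have "mpow (c u) (Suc n) = c (max 0 (u + max 0 (1 - of_nat n * (1 - u)) - 1))"
    using Suc by (simp add: const_mult max_def)
  also have "max 0 (u + max 0 (1 - of_nat n * (1 - u)) - 1) = max 0 (1 - of_nat (Suc n) * (1 - u))"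
    using Suc.prems by (auto simp: max_def algebra_simps)
  finally show ?case .
qed

lemma const_notin_proper_filter:
  assumes F: "is_filter F" "F \<noteq> A" and u: "0 \<le> u" "u < 1"
  shows "c u \<notin> F"
proof
  assume "c u \<in> F"
  obtain n where "1 / (1 - u) < of_nat n" using reals_Archimedean2 by blast
  then have "1 < of_nat n * (1 - u)" using u by (simp add: field_simps)
  then have "mpow (c u) n = zero" using mpow_const[of u n] u by (simp add: const_zero)
  moreover have "mpow (c u) n \<in> F"
    using \<open>c u \<in> F\<close> F by (induction n) (auto simp: filter_one filter_mult)
  ultimately show False using filter_eq_carrier F by simp
qed

definition le_mod :: "'a set \<Rightarrow> 'a \<Rightarrow> 'a \<Rightarrow> bool" where
  "le_mod F x y \<longleftrightarrow> x \<rightharpoonup> y \<in> F"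

lemma le_mod_trans:
  "is_filter F \<Longrightarrow> x \<in> A \<Longrightarrow> y \<in> A \<Longrightarrow> w \<in> A \<Longrightarrow> le_mod F x y \<Longrightarrow> le_mod F y w \<Longrightarrow> le_mod F x w"
  unfolding le_mod_def by (meson filter_mult filter_upclosed mv_imp_trans mv_imp_closed)

lemma le_mod_of_le: "is_filter F \<Longrightarrow> x \<in> A \<Longrightarrow> y \<in> A \<Longrightarrow> x \<preceq> y \<Longrightarrow> le_mod F x y"
  using mv_imp_eq_one_iff[of x y] filter_one[of F] by (simp add: le_mod_def)

lemma le_mod_oplus_right:
  "is_filter F \<Longrightarrow> x \<in> A \<Longrightarrow> y \<in> A \<Longrightarrow> w \<in> A \<Longrightarrow> le_mod F x y \<Longrightarrow> le_mod F (x \<oplus> w) (y \<oplus> w)"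
  unfolding le_mod_def by (meson filter_upclosed mv_imp_oplus_le mv_imp_closed oplus_closed)

lemma le_mod_oplus_left:
  "is_filter F \<Longrightarrow> x \<in> A \<Longrightarrow> y \<in> A \<Longrightarrow> w \<in> A \<Longrightarrow> le_mod F x y \<Longrightarrow> le_mod F (w \<oplus> x) (w \<oplus> y)"
  using le_mod_oplus_right oplus_commute by metis

lemma le_mod_neg_iff: "x \<in> A \<Longrightarrow> y \<in> A \<Longrightarrow> le_mod F (neg y) (neg x) \<longleftrightarrow> le_mod F x y"
  by (simp add: le_mod_def mv_imp_contrapos)

lemma le_mod_total: "F \<in> Spec \<Longrightarrow> x \<in> A \<Longrightarrow> y \<in> A \<Longrightarrow> le_mod F x y \<or> le_mod F y x"
  by (simp add: le_mod_def Spec_prime)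

lemma le_mod_of_mem: "is_filter F \<Longrightarrow> x \<in> A \<Longrightarrow> y \<in> F \<Longrightarrow> le_mod F x y"
  unfolding le_mod_def using filter_upclosed filter_subset mv_le_imp mv_imp_closed by blast

lemma le_mod_const_iff:
  assumes F: "is_filter F" "F \<noteq> A" and rs: "0 \<le> r" "r \<le> 1" "0 \<le> s" "s \<le> 1"
  shows "le_mod F (c r) (c s) \<longleftrightarrow> r \<le> s"
proof
  assume "le_mod F (c r) (c s)"
  then have "c (min (1 - r + s) 1) \<in> F"
    using rs by (simp add: le_mod_def const_imp)
  then have "\<not> min (1 - r + s) 1 < 1"
    using const_notin_proper_filter[OF F, of "min (1 - r + s) 1"] rs by auto
  then show "r \<le> s" by simp
next
  assume "r \<le> s"
  then show "le_mod F (c r) (c s)"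
    using F rs by (simp add: le_mod_def const_imp const_one filter_one)
qed

lemma le_mod_const_oplus:
  assumes F: "is_filter F" and xy: "x \<in> A" "y \<in> A" and q: "0 \<le> q1" "q1 \<le> 1" "0 \<le> q2" "q2 \<le> 1"
    and le: "le_mod F (c q1) x" "le_mod F (c q2) y"
  shows "le_mod F (c (min (q1 + q2) 1)) (x \<oplus> y)"
proof -
  have "le_mod F (c q1 \<oplus> c q2) (x \<oplus> c q2)"
    using le_mod_oplus_right[OF F _ xy(1) _ le(1)] q by simp
  moreover have "le_mod F (x \<oplus> c q2) (x \<oplus> y)"
    using le_mod_oplus_left[OF F _ xy(2) xy(1) le(2)] q by simp
  ultimately have "le_mod F (c q1 \<oplus> c q2) (x \<oplus> y)"
    using le_mod_trans[OF F] xy q by (meson const_closed oplus_closed)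
  then show ?thesis
    using const_oplus q by simp
qed

lemma le_mod_oplus_const:
  assumes F: "is_filter F" and xy: "x \<in> A" "y \<in> A" and q: "0 \<le> q1" "q1 \<le> 1" "0 \<le> q2" "q2 \<le> 1"
    and le: "le_mod F x (c q1)" "le_mod F y (c q2)"
  shows "le_mod F (x \<oplus> y) (c (min (q1 + q2) 1))"
proof -
  have "le_mod F (x \<oplus> y) (c q1 \<oplus> y)"
    using le_mod_oplus_right[OF F xy(1) _ xy(2) le(1)] q by simp
  moreover have "le_mod F (c q1 \<oplus> y) (c q1 \<oplus> c q2)"
    using le_mod_oplus_left[OF F xy(2) _ _ le(2)] q by simp
  ultimately have "le_mod F (x \<oplus> y) (c q1 \<oplus> c q2)"
    using le_mod_trans[OF F] xy q by (meson const_closed oplus_closed)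
  then show ?thesis
    using const_oplus q by simp
qed

section \<open>Evaluation at a maximal filter\<close>

text \<open>Modulo a maximal filter \<open>F\<close> the algebra is a chain, and the constants
  \<open>c q\<close> cut it like the rationals cut the reals; the value of \<open>x/F\<close> in
  \<open>[0,1]\<close> is the position of \<open>x\<close> in this cut.\<close>

definition is_cut :: "'a set \<Rightarrow> 'a \<Rightarrow> real \<Rightarrow> bool" where
  "is_cut F x t \<longleftrightarrow> 0 \<le> t \<and> t \<le> 1 \<and>
     (\<forall>q. 0 \<le> q \<longrightarrow> q \<le> 1 \<longrightarrow> of_rat q < t \<longrightarrow> le_mod F (c q) x) \<and>
     (\<forall>q. 0 \<le> q \<longrightarrow> q \<le> 1 \<longrightarrow> t < of_rat q \<longrightarrow> le_mod F x (c q))"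

definition val :: "'a set \<Rightarrow> 'a \<Rightarrow> real" where
  "val F x = Sup {of_rat q | q. 0 \<le> q \<and> q \<le> 1 \<and> le_mod F (c q) x}"

lemma is_cut_not_less:
  assumes M: "F \<in> Spec" and x: "x \<in> A" and cut: "is_cut F x s" "is_cut F x t"
  shows "\<not> s < t"
proof
  assume "s < t"
  moreover have "0 \<le> s" "t \<le> 1" using cut by (auto simp: is_cut_def)
  ultimately obtain q1 q2 where q: "0 \<le> q1" "q1 \<le> 1" "0 \<le> q2" "q2 \<le> 1"
    and lt: "s < of_rat q1" "q1 < q2" "of_rat q2 < t"
    using exists_unit_rat_between2[of s t] by blast
  have "le_mod F (c q2) (c q1)"
    using cut q lt le_mod_trans[OF Spec_filter[OF M] const_closed[OF q(3,4)] x const_closed[OF q(1,2)]]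
    by (auto simp: is_cut_def)
  then show False
    using le_mod_const_iff[OF Spec_filter[OF M] Spec_proper[OF M]] q lt by auto
qed

lemma is_cut_val:
  assumes M: "F \<in> Spec" and x: "x \<in> A"
  shows "is_cut F x (val F x)"
proof -
  have F: "is_filter F" "F \<noteq> A" using M Spec_filter Spec_proper by auto
  let ?L = "{of_rat q | q. 0 \<le> q \<and> q \<le> 1 \<and> le_mod F (c q) x} :: real set"
  have "le_mod F (c 0) x" using le_mod_of_le[OF F(1)] x by (simp add: const_zero)
  then have L0: "0 \<in> ?L" by force
  have bdd: "bdd_above ?L" by (rule bdd_aboveI[of _ 1]) auto
  have "0 \<le> val F x" unfolding val_def using cSup_upper[OF L0 bdd] .
  moreover have "val F x \<le> 1"
    unfolding val_def by (rule cSup_least) (use L0 in blast, auto)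
  moreover have "le_mod F (c q) x" if q: "0 \<le> q" "q \<le> 1" "of_rat q < val F x" for q
  proof -
    have "\<exists>l\<in>?L. of_rat q < l"
      using less_cSupD[of ?L] L0 q unfolding val_def by blast
    then obtain q' where q': "of_rat q < (of_rat q' :: real)" "0 \<le> q'" "q' \<le> 1" "le_mod F (c q') x"
      by blast
    then have "le_mod F (c q) (c q')" using le_mod_const_iff[OF F] q by (simp add: of_rat_less)
    then show ?thesis using le_mod_trans[OF F(1) _ _ x _ q'(4)] q q' by simp
  qed
  moreover have "le_mod F x (c q)" if q: "0 \<le> q" "q \<le> 1" "val F x < of_rat q" for q
  proof (rule ccontr)
    assume "\<not> le_mod F x (c q)"
    then have "of_rat q \<in> ?L" using le_mod_total[OF M x, of "c q"] q by auto
    then show False using cSup_upper[OF _ bdd] q unfolding val_def by fastforce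
  qed
  ultimately show ?thesis unfolding is_cut_def by blast
qed

lemma val_eqI: "F \<in> Spec \<Longrightarrow> x \<in> A \<Longrightarrow> is_cut F x t \<Longrightarrow> val F x = t"
  using is_cut_val is_cut_not_less by (meson linorder_neqE)

lemma val_nonneg: "F \<in> Spec \<Longrightarrow> x \<in> A \<Longrightarrow> 0 \<le> val F x"
  and val_le_one: "F \<in> Spec \<Longrightarrow> x \<in> A \<Longrightarrow> val F x \<le> 1"
  using is_cut_val by (simp_all add: is_cut_def)

lemma exists_const_le_mod:
  assumes M: "F \<in> Spec" and x: "x \<in> A" and r: "r < val F x"
  shows "\<exists>q. 0 \<le> q \<and> q \<le> 1 \<and> r < of_rat q \<and> le_mod F (c q) x"
proof (cases "r < 0")
  case True
  have "le_mod F (c 0) x"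
    using le_mod_of_le[OF Spec_filter[OF M]] x by (simp add: const_zero)
  then show ?thesis using True by (intro exI[of _ 0]) auto
next
  case False
  then obtain q where "0 \<le> q" "q \<le> 1" "r < of_rat q" "of_rat q < val F x"
    using exists_unit_rat_between[of r "val F x"] r val_le_one[OF M x] by auto
  then show ?thesis using is_cut_val[OF M x] by (auto simp: is_cut_def)
qed

lemma exists_le_mod_const:
  assumes M: "F \<in> Spec" and x: "x \<in> A" and r: "val F x < r" "r \<le> 1"
  shows "\<exists>q. 0 \<le> q \<and> q \<le> 1 \<and> of_rat q < r \<and> le_mod F x (c q)"
proof -
  obtain q where "0 \<le> q" "q \<le> 1" "val F x < of_rat q" "of_rat q < r"
    using exists_unit_rat_between[of "val F x" r] r val_nonneg[OF M x] by auto
  then show ?thesis using is_cut_val[OF M x] by (auto simp: is_cut_def)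
qed

lemma val_const:
  assumes M: "F \<in> Spec" and r: "0 \<le> r" "r \<le> 1"
  shows "val F (c r) = of_rat r"
proof (rule val_eqI[OF M])
  show "is_cut F (c r) (of_rat r)"
    unfolding is_cut_def
    using r le_mod_const_iff[OF Spec_filter[OF M] Spec_proper[OF M]] by (auto simp: of_rat_less)
qed (use r in simp)

lemma val_neg:
  assumes M: "F \<in> Spec" and x: "x \<in> A"
  shows "val F (neg x) = 1 - val F x"
proof (rule val_eqI[OF M])
  have cut: "is_cut F x (val F x)" using is_cut_val[OF M x] .
  show "is_cut F (neg x) (1 - val F x)"
    unfolding is_cut_def
  proof (intro conjI allI impI)
    show "0 \<le> 1 - val F x" "1 - val F x \<le> 1" using val_le_one[OF M x] val_nonneg[OF M x] by auto
  next
    fix q :: rat assume q: "0 \<le> q" "q \<le> 1" "of_rat q < 1 - val F x"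
    then have "le_mod F x (c (1 - q))" using cut by (auto simp: is_cut_def of_rat_diff)
    then show "le_mod F (c q) (neg x)" using le_mod_neg_iff[of x "c (1 - q)"] x q by (simp add: neg_const)
  next
    fix q :: rat assume q: "0 \<le> q" "q \<le> 1" "1 - val F x < of_rat q"
    then have "le_mod F (c (1 - q)) x" using cut by (auto simp: is_cut_def of_rat_diff)
    then show "le_mod F (neg x) (c q)" using le_mod_neg_iff[of "c (1 - q)" x] x q by (simp add: neg_const)
  qed
qed (use x in simp)

lemma const_le_mod_oplus:
  assumes M: "F \<in> Spec" and x: "x \<in> A" and y: "y \<in> A"
    and q: "0 \<le> q" "q \<le> 1" "of_rat q < val F x + val F y"
  shows "le_mod F (c q) (x \<oplus> y)"
proof -
  have F: "is_filter F" "F \<noteq> A" using M Spec_filter Spec_proper by auto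
  obtain q1 where q1: "0 \<le> q1" "q1 \<le> 1" "of_rat q - val F y < of_rat q1" "le_mod F (c q1) x"
    using exists_const_le_mod[OF M x, of "of_rat q - val F y"] q by auto
  obtain q2 where q2: "0 \<le> q2" "q2 \<le> 1" "of_rat q - of_rat q1 < (of_rat q2 :: real)" "le_mod F (c q2) y"
    using exists_const_le_mod[OF M y, of "of_rat q - of_rat q1"] q1 by auto
  have "(of_rat q :: real) < of_rat (q1 + q2)" using q2(3) by (simp add: of_rat_add)
  then have "q < q1 + q2" by (simp add: of_rat_less)
  then have "le_mod F (c q) (c (min (q1 + q2) 1))"
    using le_mod_const_iff[OF F] q q1 q2 by simp
  moreover have "le_mod F (c (min (q1 + q2) 1)) (x \<oplus> y)"
    using le_mod_const_oplus[OF F(1) x y] q1 q2 by simp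
  ultimately show ?thesis
    using le_mod_trans[OF F(1)] q q1 q2 x y by (meson const_closed oplus_closed min.cobounded2 order.trans add_nonneg_nonneg min.boundedI)
qed

lemma oplus_le_mod_const:
  assumes M: "F \<in> Spec" and x: "x \<in> A" and y: "y \<in> A"
    and q: "0 \<le> q" "q \<le> 1" "val F x + val F y < of_rat q"
  shows "le_mod F (x \<oplus> y) (c q)"
proof -
  have F: "is_filter F" "F \<noteq> A" using M Spec_filter Spec_proper by auto
  have "(of_rat q :: real) \<le> 1" using q(2) by simp
  then have "of_rat q - val F y \<le> 1" using val_nonneg[OF M y] by linarith
  moreover have "val F x < of_rat q - val F y" using q(3) by simp
  ultimately obtain q1 where q1: "0 \<le> q1" "q1 \<le> 1" "of_rat q1 < of_rat q - val F y" "le_mod F x (c q1)"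
    using exists_le_mod_const[OF M x] by blast
  have "(0::real) \<le> of_rat q1" using q1(1) by simp
  then have "val F y < of_rat q - of_rat q1" "of_rat q - of_rat q1 \<le> (1::real)"
    using q1(3) \<open>of_rat q \<le> 1\<close> by linarith+
  then obtain q2 where q2: "0 \<le> q2" "q2 \<le> 1" "(of_rat q2 :: real) < of_rat q - of_rat q1" "le_mod F y (c q2)"
    using exists_le_mod_const[OF M y] by blast
  have "of_rat (q1 + q2) < (of_rat q :: real)" using q2(3) by (simp add: of_rat_add)
  then have "q1 + q2 < q" by (simp add: of_rat_less)
  then have "le_mod F (c (min (q1 + q2) 1)) (c q)"
    using le_mod_const_iff[OF F] q q1 q2 by simp
  moreover have "le_mod F (x \<oplus> y) (c (min (q1 + q2) 1))"
    using le_mod_oplus_const[OF F(1) x y] q1 q2 by simp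
  ultimately show ?thesis
    using le_mod_trans[OF F(1)] q q1 q2 x y by (meson const_closed oplus_closed min.cobounded2 order.trans add_nonneg_nonneg min.boundedI)
qed

lemma val_oplus:
  assumes M: "F \<in> Spec" and x: "x \<in> A" and y: "y \<in> A"
  shows "val F (x \<oplus> y) = min (val F x + val F y) 1"
proof (rule val_eqI[OF M])
  show "is_cut F (x \<oplus> y) (min (val F x + val F y) 1)"
    unfolding is_cut_def
  proof (intro conjI allI impI)
    show "0 \<le> min (val F x + val F y) 1" "min (val F x + val F y) 1 \<le> 1"
      using val_nonneg[OF M x] val_nonneg[OF M y] by auto
  next
    fix q assume "0 \<le> q" "q \<le> 1" "of_rat q < min (val F x + val F y) 1"
    then show "le_mod F (c q) (x \<oplus> y)" using const_le_mod_oplus[OF M x y] by simp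
  next
    fix q assume q: "0 \<le> q" "q \<le> 1" "min (val F x + val F y) 1 < of_rat q"
    have "(of_rat q :: real) \<le> 1" using q(2) by simp
    moreover have "val F x + val F y < of_rat q \<or> 1 < (of_rat q :: real)"
      using q(3) by (metis min_less_iff_disj)
    ultimately show "le_mod F (x \<oplus> y) (c q)" using oplus_le_mod_const[OF M x y] q by auto
  qed
qed (use x y in simp)

lemma val_zero: "F \<in> Spec \<Longrightarrow> val F zero = 0"
  and val_one: "F \<in> Spec \<Longrightarrow> val F one = 1"
  using val_const[of F 0] val_neg[of F zero] by (simp_all add: const_zero)

lemma val_mult: "F \<in> Spec \<Longrightarrow> x \<in> A \<Longrightarrow> y \<in> A \<Longrightarrow> val F (x \<odot> y) = max 0 (val F x + val F y - 1)"
  by (simp add: mv_mult_def val_neg val_oplus min_def max_def)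

lemma val_imp: "F \<in> Spec \<Longrightarrow> x \<in> A \<Longrightarrow> y \<in> A \<Longrightarrow> val F (x \<rightharpoonup> y) = min (1 - val F x + val F y) 1"
  by (simp add: mv_imp_def val_neg val_oplus)

lemma val_inf: "F \<in> Spec \<Longrightarrow> x \<in> A \<Longrightarrow> y \<in> A \<Longrightarrow> val F (x \<sqinter> y) = min (val F x) (val F y)"
  using val_le_one[of F x] val_nonneg[of F x] val_le_one[of F y] val_nonneg[of F y]
  by (simp add: mv_inf_eq val_mult val_oplus val_neg min_def max_def)

lemma val_mono: "F \<in> Spec \<Longrightarrow> x \<in> A \<Longrightarrow> y \<in> A \<Longrightarrow> x \<preceq> y \<Longrightarrow> val F x \<le> val F y"
  using val_imp[of F x y] val_one[of F] by (simp add: mv_imp_eq_one_iff[symmetric] min_def split: if_splits)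

lemma val_eq_one_iff:
  assumes M: "F \<in> Spec" and x: "x \<in> A"
  shows "val F x = 1 \<longleftrightarrow> x \<in> F"
proof
  have one_if_mem: "val F w = 1" if "w \<in> F" for w
  proof (rule val_eqI[OF M])
    show "is_cut F w 1"
      using le_mod_of_mem[OF Spec_filter[OF M] _ that] by (auto simp: is_cut_def)
  qed (use that Spec_subset[OF M] in blast)
  show "x \<in> F \<Longrightarrow> val F x = 1" by (rule one_if_mem)
  assume val: "val F x = 1"
  show "x \<in> F"
  proof (rule ccontr)
    assume "x \<notin> F"
    then obtain n where n: "neg (mpow x n) \<in> F" using Spec_neg_mpow[OF M x] by blast
    have "val F (mpow x n) = 1"
      using val x by (induction n) (simp_all add: val_one[OF M] val_mult[OF M])
    then show False using one_if_mem[OF n] val_neg[OF M] x by simp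
  qed
qed

lemma std_hom_val: "F \<in> Spec \<Longrightarrow> std_hom A (\<oplus>) neg zero (val F)"
  unfolding std_hom_def using val_nonneg val_le_one val_zero val_neg val_oplus by simp

lemma std_hom_const_frac:
  assumes h: "std_hom A (\<oplus>) neg zero h" and m: "0 < m" "k \<le> m"
  shows "h (c (of_nat k / of_nat m)) = min 1 (of_nat k * h (c (1 / of_nat m)))"
  using m(2)
proof (induction k)
  case 0
  then show ?case using h by (simp add: std_hom_def const_zero)
next
  case (Suc k)
  have unit: "0 \<le> (1 / of_nat m :: rat)" "(1 / of_nat m :: rat) \<le> 1" using m by auto
  have frac: "0 \<le> (of_nat k / of_nat m :: rat)" "(of_nat k / of_nat m :: rat) \<le> 1"
    using Suc.prems m by (auto simp: divide_le_eq_1)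
  have "(of_nat (Suc k) / of_nat m :: rat) = of_nat k / of_nat m + 1 / of_nat m"
    by (simp add: add_divide_distrib)
  moreover have "(of_nat (Suc k) / of_nat m :: rat) \<le> 1"
    using Suc.prems m by (simp add: divide_le_eq_1 del: of_nat_Suc)
  ultimately have "c (of_nat (Suc k) / of_nat m) = c (of_nat k / of_nat m) \<oplus> c (1 / of_nat m)"
    using const_oplus[OF frac unit] by simp
  then have "h (c (of_nat (Suc k) / of_nat m)) = min (h (c (of_nat k / of_nat m)) + h (c (1 / of_nat m))) 1"
    using h frac unit by (simp add: std_hom_def)
  moreover have "0 \<le> h (c (1 / of_nat m))" using h unit by (simp add: std_hom_def)
  ultimately show ?case
    using Suc by (auto simp: min_def algebra_simps)
qed

lemma std_hom_const_unit_frac: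
  assumes h: "std_hom A (\<oplus>) neg zero h" and m: "0 < m"
  shows "h (c (1 / of_nat m)) = 1 / of_nat m"
proof -
  define t where "t = h (c (1 / of_nat m))"
  have unit: "0 \<le> (1 / of_nat m :: rat)" "(1 / of_nat m :: rat) \<le> 1" using m by auto
  have "(of_nat (m - 1) / of_nat m :: rat) = 1 - 1 / of_nat m"
    using m by (simp add: field_simps)
  then have "h (c (of_nat (m - 1) / of_nat m)) = 1 - t"
    using h unit by (simp add: std_hom_def t_def neg_const[symmetric])
  moreover have "h (c (of_nat (m - 1) / of_nat m)) = min 1 (of_nat (m - 1) * t)"
    using std_hom_const_frac[OF h m, of "m - 1"] by (simp add: t_def)
  ultimately have eq: "1 - t = min 1 (of_nat (m - 1) * t)" by simp
  have "of_nat (m - 1) * t < 1"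
  proof (rule ccontr)
    assume "\<not> of_nat (m - 1) * t < 1"
    then have "t = 0" using eq m by (simp add: min_def)
    then show False using \<open>\<not> of_nat (m - 1) * t < 1\<close> by simp
  qed
  then have "of_nat m * t = 1" using eq m by (simp add: algebra_simps)
  then show ?thesis using m by (simp add: t_def field_simps)
qed

lemma std_hom_const:
  assumes h: "std_hom A (\<oplus>) neg zero h" and q: "0 \<le> q" "q \<le> 1"
  shows "h (c q) = of_rat q"
proof -
  obtain a b where ab: "quotient_of q = (a, b)" by (cases "quotient_of q") auto
  have b: "0 < b" using quotient_of_denom_pos[OF ab] .
  have q_eq: "q = of_int a / of_int b" using quotient_of_div[OF ab] .
  then have "0 \<le> a" "a \<le> b" using q b by (simp_all add: zero_le_divide_iff divide_le_eq_1)
  then have km: "nat a \<le> nat b" "0 < nat b" and q_nat: "q = of_nat (nat a) / of_nat (nat b)"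
    using b q_eq by auto
  then have "h (c q) = min 1 (of_nat (nat a) / of_nat (nat b))"
    using std_hom_const_frac[OF h km(2,1)] std_hom_const_unit_frac[OF h km(2)] by simp
  also have "\<dots> = of_rat q"
    using km q_nat by (simp add: divide_le_eq_1 of_rat_divide)
  finally show ?thesis .
qed

lemma std_hom_eq_val:
  assumes M: "F \<in> Spec" and h: "std_hom A (\<oplus>) neg zero h" and ker: "{y \<in> A. h y = 1} = F"
    and x: "x \<in> A"
  shows "h x = val F x"
proof -
  have imp: "h (u \<rightharpoonup> v) = min (1 - h u + h v) 1" if "u \<in> A" "v \<in> A" for u v
    using h that by (simp add: std_hom_def mv_imp_def)
  have "is_cut F x (h x)"
    unfolding is_cut_def le_mod_def
    using h x imp std_hom_const[OF h] ker by (auto simp: std_hom_def)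
  then show ?thesis using val_eqI[OF M x] by simp
qed

lemma quot_val_eq_val: "F \<in> Spec \<Longrightarrow> x \<in> A \<Longrightarrow> quot_val A (\<oplus>) neg zero F x = val F x"
  unfolding quot_val_def
proof (rule the_equality)
  assume M: "F \<in> Spec" and x: "x \<in> A"
  have "{y \<in> A. val F y = 1} = F" using val_eq_one_iff[OF M] Spec_subset[OF M] by blast
  then show "\<exists>h. std_hom A (\<oplus>) neg zero h \<and> {y \<in> A. h y = 1} = F \<and> h x = val F x"
    using std_hom_val[OF M] by blast
qed (use std_hom_eq_val in blast)

lemma imp_mem_iff_val_le:
  assumes M: "F \<in> Spec" and x: "x \<in> A" and y: "y \<in> A"
  shows "x \<rightharpoonup> y \<in> F \<longleftrightarrow> val F x \<le> val F y"
proof -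
  have "x \<rightharpoonup> y \<in> F \<longleftrightarrow> val F (x \<rightharpoonup> y) = 1"
    by (rule val_eq_one_iff[OF M, symmetric]) (use x y in simp)
  also have "\<dots> \<longleftrightarrow> val F x \<le> val F y"
    unfolding val_imp[OF M x y] by (auto simp: min_def)
  finally show ?thesis .
qed

end

section \<open>Semisimple tense Pavelka algebras\<close>

locale semisimple_pavelka = pavelka_alg +
  assumes semisimple: "semisimple A (\<oplus>) neg zero"
begin

lemma le_iff_val_le:
  assumes x: "x \<in> A" and y: "y \<in> A"
  shows "x \<preceq> y \<longleftrightarrow> (\<forall>F\<in>Spec. val F x \<le> val F y)"
proof
  assume "\<forall>F\<in>Spec. val F x \<le> val F y"
  then have "x \<rightharpoonup> y \<in> {w \<in> A. \<forall>F\<in>Spec. w \<in> F}"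
    using imp_mem_iff_val_le x y by simp
  then have "x \<rightharpoonup> y = one"
    using semisimple unfolding semisimple_def by blast
  then show "x \<preceq> y" using mv_imp_eq_one_iff x y by simp
qed (use val_mono x y in auto)

lemma eq_iff_val_eq:
  assumes "x \<in> A" "y \<in> A"
  shows "x = y \<longleftrightarrow> (\<forall>F\<in>Spec. val F x = val F y)"
proof
  assume "\<forall>F\<in>Spec. val F x = val F y"
  then have "x \<preceq> y" "y \<preceq> x" using le_iff_val_le assms by auto
  then show "x = y" using mv_le_antisym assms by blast
qed simp

lemma exists_minf_list_le:
  assumes W: "W \<subseteq> A" and y: "y \<in> A" and below: "\<forall>F\<in>Spec. \<exists>w\<in>W. val F w < val F y"
  shows "\<exists>ws. set ws \<subseteq> W \<and> minf_list ws \<preceq> y"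
proof -
  have cover: "\<forall>F\<in>Spec. \<exists>w\<in>W. y \<rightharpoonup> w \<notin> F"
    using below imp_mem_iff_val_le W y by (meson not_le subsetD)
  have "y \<rightharpoonup> w \<in> A" if "w \<in> W" for w
    using that W y by auto
  then obtain ws where ws: "set ws \<subseteq> W" and miss: "\<forall>F\<in>Spec. \<exists>w\<in>set ws. y \<rightharpoonup> w \<notin> F"
    using Spec_compact[of W "\<lambda>w. y \<rightharpoonup> w", OF _ cover] by blast
  have "val F (minf_list ws) \<le> val F y" if M: "F \<in> Spec" for F
  proof -
    obtain w where w: "w \<in> set ws" "y \<rightharpoonup> w \<notin> F" using miss M by blast
    have wsA: "set ws \<subseteq> A" and wA: "w \<in> A" using ws w W by auto
    have "val F (minf_list ws) \<le> val F w"
      using val_mono[OF M minf_list_closed[OF wsA] wA minf_list_le[OF wsA w(1)]] .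
    also have "\<dots> < val F y" using imp_mem_iff_val_le[OF M y] w ws W by auto
    finally show ?thesis by simp
  qed
  then have "minf_list ws \<preceq> y"
    using le_iff_val_le ws W y by auto
  then show ?thesis using ws by blast
qed

end

locale semisimple_tense = semisimple_pavelka +
  fixes G H :: "'a \<Rightarrow> 'a"
  assumes tense_pavelka: "tense_pavelka A (\<oplus>) neg c G H"
begin

lemma G_closed [simp]: "x \<in> A \<Longrightarrow> G x \<in> A"
  and H_closed [simp]: "x \<in> A \<Longrightarrow> H x \<in> A"
  and G_inf: "x \<in> A \<Longrightarrow> y \<in> A \<Longrightarrow> G (x \<sqinter> y) = G x \<sqinter> G y"
  and const_imp_G: "0 \<le> r \<Longrightarrow> r \<le> 1 \<Longrightarrow> x \<in> A \<Longrightarrow> c r \<rightharpoonup> G x = G (c r \<rightharpoonup> x)"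
  and neg_H_neg_G_le: "x \<in> A \<Longrightarrow> neg (H (neg (G x))) \<preceq> x"
  and neg_G_neg_H_le: "x \<in> A \<Longrightarrow> neg (G (neg (H x))) \<preceq> x"
  using tense_pavelka by (simp_all add: tense_pavelka_def const_zero)

lemma semisimple_tense_swap: "semisimple_tense A (\<oplus>) neg zero c H G"
proof -
  have "tense_pavelka A (\<oplus>) neg c H G"
    using tense_pavelka unfolding tense_pavelka_def by blast
  then show ?thesis by unfold_locales
qed

lemma G_mono: "x \<in> A \<Longrightarrow> y \<in> A \<Longrightarrow> x \<preceq> y \<Longrightarrow> G x \<preceq> G y"
  using G_inf[of x y] mv_inf_absorb1[of x y] mv_inf_le2[of "G x" "G y"] by simp

lemma G_const_oplus: "0 \<le> s \<Longrightarrow> s \<le> 1 \<Longrightarrow> x \<in> A \<Longrightarrow> G (c s \<oplus> x) = c s \<oplus> G x"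
  using const_imp_G[of "1 - s" x] by (simp add: mv_imp_def neg_const)

lemma G_one: "G one = one"
  using G_const_oplus[of 1 zero] by (simp add: const_one)

lemma val_G_const_oplus:
  "F \<in> Spec \<Longrightarrow> 0 \<le> s \<Longrightarrow> s \<le> 1 \<Longrightarrow> x \<in> A \<Longrightarrow> val F (G (c s \<oplus> x)) = min (of_rat s + val F (G x)) 1"
  by (simp add: G_const_oplus val_oplus val_const)

lemma val_G_mult_const_ge:
  assumes M: "F \<in> Spec" and s: "0 \<le> s" "s \<le> 1" and a: "a \<in> A"
  shows "val F (G a) - of_rat s \<le> val F (G (a \<odot> c (1 - s)))"
proof -
  have "c s \<oplus> (a \<odot> c (1 - s)) = a \<squnion> c s"
    using s a by (simp add: mv_sup_def mv_mult_def neg_const oplus_commute)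
  then have "a \<preceq> c s \<oplus> (a \<odot> c (1 - s))"
    using s a by (simp add: mv_sup_ge1)
  then have "val F (G a) \<le> val F (G (c s \<oplus> (a \<odot> c (1 - s))))"
    using s a by (simp add: G_mono val_mono[OF M])
  then show ?thesis
    using val_G_const_oplus[OF M s] s a by simp
qed

abbreviation R :: "'a set \<Rightarrow> 'a set \<Rightarrow> real" where
  "R \<equiv> time_rel A (\<oplus>) neg zero G"

lemma R_eq: "F \<in> Spec \<Longrightarrow> F' \<in> Spec \<Longrightarrow> R F F' = (INF a\<in>A. luk_imp (val F' (G a)) (val F a))"
  unfolding time_rel_def by (simp add: quot_val_eq_val)

lemma bdd_below_R: "F \<in> Spec \<Longrightarrow> F' \<in> Spec \<Longrightarrow> bdd_below ((\<lambda>a. luk_imp (val F' (G a)) (val F a)) ` A)"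
  by (rule bdd_belowI[of _ 0]) (auto intro!: luk_imp_nonneg val_le_one val_nonneg)

lemma R_le:
  assumes "F \<in> Spec" "F' \<in> Spec" "a \<in> A"
  shows "R F F' \<le> luk_imp (val F' (G a)) (val F a)"
  unfolding R_eq[OF assms(1,2)] by (rule cINF_lower[OF bdd_below_R]) (use assms in auto)

lemma R_greatest:
  assumes "F \<in> Spec" "F' \<in> Spec" and "\<And>a. a \<in> A \<Longrightarrow> t \<le> luk_imp (val F' (G a)) (val F a)"
  shows "t \<le> R F F'"
proof -
  have "A \<noteq> {}" using zero_closed by blast
  then show ?thesis unfolding R_eq[OF assms(1,2)] by (rule cINF_greatest) (rule assms(3))
qed

lemma R_less_iff:
  assumes "F \<in> Spec" "F' \<in> Spec"
  shows "R F F' < t \<longleftrightarrow> (\<exists>a\<in>A. luk_imp (val F' (G a)) (val F a) < t)"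
  unfolding R_eq[OF assms] using cINF_less_iff[OF _ bdd_below_R[OF assms]] zero_closed by blast

lemma R_le_one: "F \<in> Spec \<Longrightarrow> F' \<in> Spec \<Longrightarrow> R F F' \<le> 1"
  using R_le[of F F' zero] luk_imp_le_one[of "val F' (G zero)" "val F zero"] by simp

lemma R_mult_le: "F \<in> Spec \<Longrightarrow> F' \<in> Spec \<Longrightarrow> a \<in> A \<Longrightarrow> R F F' + val F' (G a) - 1 \<le> val F a"
  using R_le[of F F' a] le_luk_imp_iff[of "R F F'"] R_le_one by (simp add: add.commute)

lemma val_G_le_luk_imp: "F \<in> Spec \<Longrightarrow> F' \<in> Spec \<Longrightarrow> y \<in> A \<Longrightarrow> val F (G y) \<le> luk_imp (R F' F) (val F' y)"
  using R_mult_le[of F' F y] val_le_one[of F "G y"] le_luk_imp_iff by simp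

lemma time_rel_H: 
  assumes M: "F \<in> Spec" "F' \<in> Spec"
  shows "time_rel A (\<oplus>) neg zero H F F' = R F' F"
proof -
  have H_eq: "time_rel A (\<oplus>) neg zero H F F' = (INF b\<in>A. luk_imp (val F' (H b)) (val F b))"
    using M unfolding time_rel_def by (simp add: quot_val_eq_val)
  have bdd: "bdd_below ((\<lambda>b. luk_imp (val F' (H b)) (val F b)) ` A)"
    using M by (intro bdd_belowI[of _ 0]) (auto intro!: luk_imp_nonneg val_le_one val_nonneg)
  show ?thesis
    unfolding H_eq
  proof (rule antisym)
    show "R F' F \<le> (INF b\<in>A. luk_imp (val F' (H b)) (val F b))"
    proof (rule cINF_greatest)
      fix b assume b: "b \<in> A"
      have "R F' F \<le> luk_imp (val F (G (neg (H b)))) (val F' (neg (H b)))"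
        using R_le M b by simp
      moreover have "val F (neg (G (neg (H b)))) \<le> val F b"
        using val_mono[OF M(1) _ b neg_G_neg_H_le[OF b]] b by simp
      ultimately show "R F' F \<le> luk_imp (val F' (H b)) (val F b)"
        using M b by (auto simp: luk_imp_def val_neg)
    qed (use zero_closed in blast)
    show "(INF b\<in>A. luk_imp (val F' (H b)) (val F b)) \<le> R F' F"
    proof (rule R_greatest[OF M(2,1)])
      fix a assume a: "a \<in> A"
      have "(INF b\<in>A. luk_imp (val F' (H b)) (val F b)) \<le> luk_imp (val F' (H (neg (G a)))) (val F (neg (G a)))"
        using cINF_lower[OF bdd] a by simp
      moreover have "val F' (neg (H (neg (G a)))) \<le> val F' a"
        using val_mono[OF M(2) _ a neg_H_neg_G_le[OF a]] a by simp
      ultimately show "(INF b\<in>A. luk_imp (val F' (H b)) (val F b)) \<le> luk_imp (val F (G a)) (val F' a)"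
        using M a by (auto simp: luk_imp_def val_neg)
    qed
  qed
qed

lemma val_G_minf_list_gt:
  "F \<in> Spec \<Longrightarrow> set ws \<subseteq> A \<Longrightarrow> t < 1 \<Longrightarrow> \<forall>w\<in>set ws. t < val F (G w) \<Longrightarrow> t < val F (G (minf_list ws))"
  by (induction ws) (simp_all add: G_one val_one G_inf val_inf)

text \<open>The witness is \<open>a\<close> shifted up or down by a rational constant.\<close>

lemma exists_G_shift:
  assumes M: "F \<in> Spec" "F' \<in> Spec" and a: "a \<in> A" and \<tau>: "0 \<le> \<tau>" "\<tau> < 1" and \<eta>: "0 < \<eta>"
  shows "\<exists>w\<in>A. \<tau> < val F (G w) \<and> val F' w \<le> max 0 (val F' a - val F (G a) + \<tau> + \<eta>)"
proof -
  let ?g = "val F (G a)" and ?v = "val F' a"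
  have g: "0 \<le> ?g" "?g \<le> 1"
    using M a val_nonneg val_le_one by auto
  show ?thesis
  proof (cases "?g \<le> \<tau>")
    case True
    then obtain s where s: "0 \<le> s" "s \<le> 1" "\<tau> - ?g < of_rat s" "of_rat s < min (\<tau> - ?g + \<eta>) 1"
      using exists_unit_rat_between[of "\<tau> - ?g" "min (\<tau> - ?g + \<eta>) 1"] \<tau> \<eta> g by auto
    have "val F (G (c s \<oplus> a)) = min (of_rat s + ?g) 1"
      using val_G_const_oplus[OF M(1) s(1,2) a] .
    moreover have "val F' (c s \<oplus> a) = min (of_rat s + ?v) 1"
      using M(2) s a by (simp add: val_oplus val_const)
    ultimately show ?thesis
      using s \<tau> a by (intro bexI[of _ "c s \<oplus> a"]) auto
  next
    case False
    then obtain s where s: "0 \<le> s" "s \<le> 1" "max 0 (?g - \<tau> - \<eta>) < of_rat s" "of_rat s < ?g - \<tau>"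
      using exists_unit_rat_between[of "max 0 (?g - \<tau> - \<eta>)" "?g - \<tau>"] \<tau> \<eta> g by auto
    have "?g - of_rat s \<le> val F (G (a \<odot> c (1 - s)))"
      using val_G_mult_const_ge[OF M(1) s(1,2) a] .
    moreover have "val F' (a \<odot> c (1 - s)) = max 0 (?v - of_rat s)"
      using M(2) s a by (simp add: val_mult val_const of_rat_diff)
    ultimately show ?thesis
      using s \<tau> a by (intro bexI[of _ "a \<odot> c (1 - s)"]) auto
  qed
qed

lemma exists_G_gap:
  assumes M: "F \<in> Spec" "F' \<in> Spec" and y: "y \<in> A" and \<epsilon>: "0 < \<epsilon>"
    and far: "val F (G y) + \<epsilon> \<le> luk_imp (R F' F) (val F' y)"
  shows "\<exists>w\<in>A. val F (G y) + \<epsilon> / 4 < val F (G w) \<and> val F' w \<le> max 0 (val F' y - \<epsilon> / 8)"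
proof -
  let ?p = "val F (G y)" and ?v = "val F' y"
  have p: "0 \<le> ?p" "?p + \<epsilon> \<le> 1"
    using far luk_imp_le_one[of "R F' F" ?v] val_nonneg M y by auto
  have "\<exists>a\<in>A. val F' a - val F (G a) < ?v - ?p - \<epsilon> / 2"
  proof (cases "?p + \<epsilon> / 2 < ?v")
    case True
    then show ?thesis
      using M G_one val_one by (intro bexI[of _ one]) auto
  next
    case False
    have "?p + \<epsilon> + R F' F - 1 \<le> ?v"
      using far p le_luk_imp_iff[of "?p + \<epsilon>" "R F' F" ?v] by simp
    then have "R F' F < 1 - ?p - \<epsilon> / 2 + ?v" using \<epsilon> by simp
    then obtain a where a: "a \<in> A" "luk_imp (val F (G a)) (val F' a) < 1 - ?p - \<epsilon> / 2 + ?v"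
      using R_less_iff[OF M(2,1)] by blast
    moreover have "1 - ?p - \<epsilon> / 2 + ?v \<le> 1" using False by simp
    ultimately have "val F' a < (1 - ?p - \<epsilon> / 2 + ?v) + val F (G a) - 1"
      using luk_imp_less_iff by blast
    then show ?thesis using a(1) by (intro bexI[of _ a]) auto
  qed
  then obtain a where a: "a \<in> A" "val F' a - val F (G a) < ?v - ?p - \<epsilon> / 2" by blast
  obtain w where "w \<in> A" "?p + \<epsilon> / 4 < val F (G w)"
    and "val F' w \<le> max 0 (val F' a - val F (G a) + (?p + \<epsilon> / 4) + \<epsilon> / 8)"
    using exists_G_shift[OF M a(1), of "?p + \<epsilon> / 4" "\<epsilon> / 8"] p \<epsilon> by auto
  moreover have "val F' a - val F (G a) + (?p + \<epsilon> / 4) + \<epsilon> / 8 \<le> ?v - \<epsilon> / 8"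
    using a(2) by simp
  ultimately show ?thesis by (meson max.mono order.refl order.trans)
qed

lemma exists_R_imp_less:
  assumes M: "F \<in> Spec" and y: "y \<in> A" and \<epsilon>: "0 < \<epsilon>"
  shows "\<exists>F'\<in>Spec. luk_imp (R F' F) (val F' y) < val F (G y) + \<epsilon>"
proof (rule ccontr)
  let ?p = "val F (G y)"
  assume "\<not> ?thesis"
  then have far: "?p + \<epsilon> \<le> luk_imp (R F' F) (val F' y)" if "F' \<in> Spec" for F'
    using that by (auto simp: not_less)
  have "?p + \<epsilon> \<le> 1" using far[OF M] luk_imp_le_one order_trans by blast
  obtain \<delta> where \<delta>: "0 \<le> \<delta>" "\<delta> \<le> 1" "(0::real) < of_rat \<delta>" "of_rat \<delta> < min (\<epsilon> / 4) 1"
    using exists_unit_rat_between[of 0 "min (\<epsilon> / 4) 1"] \<epsilon> by auto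
  define y' where "y' = c \<delta> \<oplus> y"
  have y': "y' \<in> A" using \<delta> y by (simp add: y'_def)
  let ?W = "{w \<in> A. ?p + \<epsilon> / 4 < val F (G w)}"
  have "\<exists>w\<in>?W. val F' w < val F' y'" if M': "F' \<in> Spec" for F'
  proof -
    obtain w where "w \<in> ?W" and w: "val F' w \<le> max 0 (val F' y - \<epsilon> / 8)"
      using exists_G_gap[OF M M' y \<epsilon> far[OF M']] by blast
    moreover have "val F' y' = min (of_rat \<delta> + val F' y) 1"
      using M' \<delta> y by (simp add: y'_def val_oplus val_const)
    moreover have "max 0 (val F' y - \<epsilon> / 8) < min (of_rat \<delta> + val F' y) 1"
      unfolding max_less_iff_conj min_less_iff_conj
      using \<delta> \<epsilon> val_nonneg[OF M' y] val_le_one[OF M' y] by (intro conjI) linarith+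
    ultimately show ?thesis by (metis le_less_trans)
  qed
  then obtain ws where ws: "set ws \<subseteq> ?W" "minf_list ws \<preceq> y'"
    using exists_minf_list_le[of ?W y'] y' by blast
  have wsA: "set ws \<subseteq> A" using ws(1) by blast
  have "?p + \<epsilon> / 4 < 1" using \<open>?p + \<epsilon> \<le> 1\<close> \<epsilon> by simp
  moreover have "\<forall>w\<in>set ws. ?p + \<epsilon> / 4 < val F (G w)" using ws(1) by blast
  ultimately have "?p + \<epsilon> / 4 < val F (G (minf_list ws))"
    by (rule val_G_minf_list_gt[OF M wsA])
  also have "\<dots> \<le> val F (G y')"
    using ws(2) wsA y' by (simp add: G_mono val_mono[OF M])
  also have "\<dots> = min (of_rat \<delta> + ?p) 1"
    using val_G_const_oplus[OF M \<delta>(1,2) y] by (simp add: y'_def)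
  finally show False using \<delta> by linarith
qed

theorem val_G_eq_INF:
  assumes M: "F \<in> Spec" and y: "y \<in> A"
  shows "val F (G y) = (INF F'\<in>Spec. luk_imp (R F' F) (val F' y))"
proof -
  have bdd: "bdd_below ((\<lambda>F'. luk_imp (R F' F) (val F' y)) ` Spec)"
    using M y by (intro bdd_belowI[of _ 0]) (auto intro!: luk_imp_nonneg R_le_one val_nonneg)
  show ?thesis
  proof (rule antisym)
    show "val F (G y) \<le> (INF F'\<in>Spec. luk_imp (R F' F) (val F' y))"
      using M y val_G_le_luk_imp by (intro cINF_greatest) auto
    show "(INF F'\<in>Spec. luk_imp (R F' F) (val F' y)) \<le> val F (G y)"
    proof (rule field_le_epsilon)
      fix \<epsilon> :: real assume "0 < \<epsilon>"
      then obtain F' where "F' \<in> Spec" "luk_imp (R F' F) (val F' y) < val F (G y) + \<epsilon>"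
        using exists_R_imp_less[OF M y] by blast
      then show "(INF F'\<in>Spec. luk_imp (R F' F) (val F' y)) \<le> val F (G y) + \<epsilon>"
        using cINF_lower[OF bdd] by (meson less_imp_le order_trans)
    qed
  qed
qed

lemma fuzzy_refl_iff: "fuzzy_refl Spec R \<longleftrightarrow> (\<forall>x\<in>A. G x \<preceq> x)"
proof
  assume refl: "fuzzy_refl Spec R"
  have "val F (G x) \<le> val F x" if "F \<in> Spec" "x \<in> A" for F x
    using R_mult_le[OF that(1,1,2)] refl that by (simp add: fuzzy_refl_def)
  then show "\<forall>x\<in>A. G x \<preceq> x" using le_iff_val_le by simp
next
  assume le: "\<forall>x\<in>A. G x \<preceq> x"
  have "R F F = 1" if M: "F \<in> Spec" for F
  proof (rule antisym)
    show "1 \<le> R F F"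
      using le val_mono[OF M] by (intro R_greatest[OF M M]) (simp add: luk_imp_def)
  qed (rule R_le_one[OF M M])
  then show "fuzzy_refl Spec R" by (simp add: fuzzy_refl_def)
qed

lemma val_G_le_val_GG_of_trans:
  assumes trans: "fuzzy_trans Spec R" and M: "F \<in> Spec" and x: "x \<in> A"
  shows "val F (G x) \<le> val F (G (G x))"
proof -
  have "R F' F + val F (G x) - 1 \<le> val F' (G x)" if M': "F' \<in> Spec" for F'
  proof -
    have "R F' F + val F (G x) - 1 \<le> luk_imp (R F'' F') (val F'' x)" if M'': "F'' \<in> Spec" for F''
    proof -
      have "luk_mult (R F'' F') (R F' F) \<le> R F'' F"
        using trans M M' M'' by (simp add: fuzzy_trans_def)
      moreover have "R F'' F + val F (G x) - 1 \<le> val F'' x"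
        using R_mult_le[OF M'' M x] .
      moreover have "R F' F \<le> 1" "val F (G x) \<le> 1"
        using R_le_one[OF M' M] val_le_one[OF M] x by auto
      ultimately show ?thesis
        by (simp add: le_luk_imp_iff luk_mult_def)
    qed
    then show ?thesis
      unfolding val_G_eq_INF[OF M' x] using M by (intro cINF_greatest) auto
  qed
  then have "val F (G x) \<le> luk_imp (R F' F) (val F' (G x))" if "F' \<in> Spec" for F'
    using that le_luk_imp_iff val_le_one[OF M] x by (simp add: add.commute)
  then show ?thesis
    unfolding val_G_eq_INF[OF M G_closed[OF x]] using M by (intro cINF_greatest) auto
qed

lemma fuzzy_trans_iff: "fuzzy_trans Spec R \<longleftrightarrow> (\<forall>x\<in>A. G x \<preceq> G (G x))"
proof
  assume "fuzzy_trans Spec R"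
  then show "\<forall>x\<in>A. G x \<preceq> G (G x)"
    using val_G_le_val_GG_of_trans le_iff_val_le by simp
next
  assume GG: "\<forall>x\<in>A. G x \<preceq> G (G x)"
  have "luk_mult (R s t) (R t u) \<le> R s u" if M: "s \<in> Spec" "t \<in> Spec" "u \<in> Spec" for s t u
  proof (rule R_greatest[OF M(1,3)])
    fix a assume a: "a \<in> A"
    have "R t u + val u (G (G a)) - 1 \<le> val t (G a)" "R s t + val t (G a) - 1 \<le> val s a"
      using R_mult_le M a by auto
    moreover have "val u (G a) \<le> val u (G (G a))"
      using GG val_mono[OF M(3)] a by simp
    moreover have "R s t \<le> 1" "R t u \<le> 1" "val u (G a) \<le> 1" "0 \<le> val s a"
      using R_le_one val_le_one val_nonneg M a by auto
    ultimately show "luk_mult (R s t) (R t u) \<le> luk_imp (val u (G a)) (val s a)"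
      by (simp add: luk_mult_def luk_imp_def)
  qed
  then show "fuzzy_trans Spec R" by (simp add: fuzzy_trans_def)
qed

lemma fuzzy_sym_iff: "fuzzy_sym Spec R \<longleftrightarrow> (\<forall>x\<in>A. H x = G x)"
proof
  assume sym: "fuzzy_sym Spec R"
  interpret rev: semisimple_tense A "(\<oplus>)" neg zero c H G
    by (rule semisimple_tense_swap)
  have "val F (H x) = val F (G x)" if M: "F \<in> Spec" and x: "x \<in> A" for F x
  proof -
    have "val F (H x) = (INF F'\<in>Spec. luk_imp (time_rel A (\<oplus>) neg zero H F' F) (val F' x))"
      using rev.val_G_eq_INF[OF M x] .
    also have "\<dots> = (INF F'\<in>Spec. luk_imp (R F' F) (val F' x))"
      using sym M time_rel_H by (intro INF_cong) (auto simp: fuzzy_sym_def)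
    finally show ?thesis using val_G_eq_INF[OF M x] by simp
  qed
  then show "\<forall>x\<in>A. H x = G x" using eq_iff_val_eq by simp
next
  assume "\<forall>x\<in>A. H x = G x"
  then have "time_rel A (\<oplus>) neg zero H = R"
    unfolding time_rel_def by (intro ext INF_cong) auto
  then show "fuzzy_sym Spec R"
    using time_rel_H by (simp add: fuzzy_sym_def)
qed

lemma fuzzy_refl_iff_H: "fuzzy_refl Spec R \<longleftrightarrow> (\<forall>x\<in>A. H x \<preceq> x)"
proof -
  interpret rev: semisimple_tense A "(\<oplus>)" neg zero c H G
    by (rule semisimple_tense_swap)
  show ?thesis
    using rev.fuzzy_refl_iff fuzzy_refl_converse[of Spec "time_rel A (\<oplus>) neg zero H" R] time_rel_H
    by simp
qed

lemma fuzzy_trans_iff_H: "fuzzy_trans Spec R \<longleftrightarrow> (\<forall>x\<in>A. H x \<preceq> H (H x))"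
proof -
  interpret rev: semisimple_tense A "(\<oplus>)" neg zero c H G
    by (rule semisimple_tense_swap)
  show ?thesis
    using rev.fuzzy_trans_iff fuzzy_trans_converse[of Spec "time_rel A (\<oplus>) neg zero H" R] time_rel_H
    by simp
qed

end

theorem theorem13:
  fixes A :: "'a set" and oplus :: "'a \<Rightarrow> 'a \<Rightarrow> 'a" and neg :: "'a \<Rightarrow> 'a"
    and c :: "rat \<Rightarrow> 'a" and G H :: "'a \<Rightarrow> 'a"
  assumes "tense_pavelka A oplus neg c G H"
    and "semisimple A oplus neg (c 0)"
  defines "S \<equiv> max_filters A oplus neg (c 0)"
    and "R \<equiv> time_rel A oplus neg (c 0) G"
    and "le \<equiv> mv_le oplus neg (c 0)"
  shows "(fuzzy_refl S R \<longleftrightarrow> (\<forall>x\<in>A. le (G x) x)) \<and>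
         (fuzzy_refl S R \<longleftrightarrow> (\<forall>x\<in>A. le (H x) x)) \<and>
         (fuzzy_sym S R \<longleftrightarrow> (\<forall>x\<in>A. H x = G x)) \<and>
         (fuzzy_trans S R \<longleftrightarrow> (\<forall>x\<in>A. le (G x) (G (G x)))) \<and>
         (fuzzy_trans S R \<longleftrightarrow> (\<forall>x\<in>A. le (H x) (H (H x))))"
proof -
  interpret semisimple_tense A oplus neg "c 0" c G H
    using assms(1,2) by unfold_locales (simp_all add: tense_pavelka_def pavelka_algebra_def)
  show ?thesis
    unfolding S_def R_def le_def
    using fuzzy_refl_iff fuzzy_refl_iff_H fuzzy_sym_iff fuzzy_trans_iff fuzzy_trans_iff_H by blast
qed

end
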